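(* Let $\tau>0$ and consider the system \[ \begin{cases} x'(t)=s-dx(t)-kx(t)v(t),\\ y'(t)=k\mathrm{e}^{-\delta\tau}x(t-\tau)v(t-\tau)-\delta y(t)-py(t)z(t),\\ v'(t)=N\delta y(t)-\mu v(t),\\ z'(t)=qy(t)z(t)-bz(t), \end{cases} \] with initial conditions $x(\theta)=\varphi_{1}(\theta)$, $v(\theta)=\varphi_{3}(\theta)$ for $\theta\in[-\tau,0]$, $y(0)=y_{0}\ge 0$, $z(0)=z_{0}\ge0$, where $\varphi_{1},\varphi_3\in C([-\tau,0],\mathbb{R}_{+})$. Let \[ \overline{R}_{0}=\frac{s}{d\frac{\mu}{k\mathrm{e}^{-\delta\tau}N}},\qquad \overline{R}_{1}=\frac{s}{d\frac{\mu}{k\mathrm{e}^{-\delta\tau}N}+\mathrm{e}^{\delta\tau}\delta\frac{b}{q}}, \] let $E_0=(s/d,0,0,0)$, let $\overline{E}_1=\left(\frac{\mu\mathrm{e}^{\delta\tau}}{kN},\ \frac{\mathrm{e}^{-\delta\tau}}{\delta}\big(s-\frac{d\mu\mathrm{e}^{\delta\tau}}{kN}\big),\ \frac{N\mathrm{e}^{-\delta\tau}}{\mu}\big(s-\frac{d\mu\mathrm{e}^{\delta\tau}}{kN}\big),\ 0\right)$ (the equilibrium with positive $x,y,v$ and $z=0$, existing when $\overline R_0>1$), and let $\overline{E}_2=\left(\bar x_2,\ \frac{b}{q},\ \frac{N\delta b}{\mu q},\ \frac{\delta}{p}\big(\frac{k\mathrm{e}^{-\delta\tau}N\bar x_2}{\mu}-1\big)\right)$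 with $\bar x_2=\frac{s}{d+kN\delta b/(\mu q)}$ (the equilibrium with all components positive, existing when $\overline R_1>1$). Then: (i) If $\overline{R}_{0}\leq1$, then $E_{0}$ is globally asymptotically stable. (ii) If $\overline{R}_{1}\leq1<\overline{R}_{0}$, then $\overline{E}_{1}$ is globally asymptotically stable with respect to solutions whose initial data satisfy $y_{0}+\varphi_{1}(-\tau)\varphi_{3}(-\tau)>0$ or $\varphi_{3}(0)>0$. (iii) If $\overline{R}_{1}>1$, then $\overline{E}_{2}$ is globally asymptotically stable with respect to solutions whose initial data satisfy $z_{0}>0$ and either $y_{0}+\varphi_{1}(-\tau)\varphi_{3}(-\tau)>0$ or $\varphi_{3}(0)>0$.
   Context: All parameters $s,d,k,\delta,p,N,\mu,q,b$ are positive constants. Globally asymptotically stable means: the equilibrium is (Lyapunov) stable and every solution with admissible initial data converges to it as $t\to\infty$. *)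

theory Defs
  imports "HOL-Analysis.Analysis"
begin

text \<open>Solutions of the delayed virus model on [-tau, infinity).
  x and v are given on [-tau,0] by the (continuous) initial functions phi1, phi3;
  y and z only need their values for t >= 0 (y(0)=y0, z(0)=z0).
  The ODEs hold for t >= 0, with a right derivative at t = 0.\<close>
definition is_solution ::
  "real \<Rightarrow> real \<Rightarrow> real \<Rightarrow> real \<Rightarrow> real \<Rightarrow> real \<Rightarrow> real \<Rightarrow> real \<Rightarrow> real \<Rightarrow> real \<Rightarrow>
   (real \<Rightarrow> real) \<Rightarrow> (real \<Rightarrow> real) \<Rightarrow> (real \<Rightarrow> real) \<Rightarrow> (real \<Rightarrow> real) \<Rightarrow> bool" where
  "is_solution s d k dl p N mu q b tau x y v z \<longleftrightarrow>
     continuous_on {-tau..} x \<and> continuous_on {-tau..} v \<and>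
     continuous_on {0..} y \<and> continuous_on {0..} z \<and>
     (\<forall>t\<ge>0.
        (x has_real_derivative (s - d * x t - k * x t * v t)) (at t within {0..}) \<and>
        (y has_real_derivative
            (k * exp (- dl * tau) * x (t - tau) * v (t - tau) - dl * y t - p * y t * z t))
            (at t within {0..}) \<and>
        (v has_real_derivative (N * dl * y t - mu * v t)) (at t within {0..}) \<and>
        (z has_real_derivative (q * y t * z t - b * z t)) (at t within {0..}))"

definition admissible ::
  "real \<Rightarrow> (real \<Rightarrow> real) \<Rightarrow> (real \<Rightarrow> real) \<Rightarrow> (real \<Rightarrow> real) \<Rightarrow> (real \<Rightarrow> real) \<Rightarrow> bool" where
  "admissible tau x y v z \<longleftrightarrow>
     (\<forall>\<theta>\<in>{-tau..0}. x \<theta> \<ge> 0 \<and> v \<theta> \<ge> 0) \<and> y 0 \<ge> 0 \<and> z 0 \<ge> 0"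

definition GAS ::
  "real \<Rightarrow> real \<Rightarrow> real \<Rightarrow> real \<Rightarrow> real \<Rightarrow> real \<Rightarrow> real \<Rightarrow> real \<Rightarrow> real \<Rightarrow> real \<Rightarrow>
   ((real \<Rightarrow> real) \<Rightarrow> (real \<Rightarrow> real) \<Rightarrow> (real \<Rightarrow> real) \<Rightarrow> (real \<Rightarrow> real) \<Rightarrow> bool) \<Rightarrow>
   real \<Rightarrow> real \<Rightarrow> real \<Rightarrow> real \<Rightarrow> bool" where
  "GAS s d k dl p N mu q b tau P ex ey ev ez \<longleftrightarrow>
     (\<forall>\<epsilon>>0. \<exists>\<eta>>0. \<forall>x y v z.
        is_solution s d k dl p N mu q b tau x y v z \<and> P x y v z \<and>
        (\<forall>\<theta>\<in>{-tau..0}. \<bar>x \<theta> - ex\<bar> < \<eta> \<and> \<bar>v \<theta> - ev\<bar> < \<eta>) \<and>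
        \<bar>y 0 - ey\<bar> < \<eta> \<and> \<bar>z 0 - ez\<bar> < \<eta> \<longrightarrow>
        (\<forall>t\<ge>0. \<bar>x t - ex\<bar> < \<epsilon> \<and> \<bar>y t - ey\<bar> < \<epsilon> \<and> \<bar>v t - ev\<bar> < \<epsilon> \<and> \<bar>z t - ez\<bar> < \<epsilon>)) \<and>
     (\<forall>x y v z. is_solution s d k dl p N mu q b tau x y v z \<and> P x y v z \<longrightarrow>
        (x \<longlongrightarrow> ex) at_top \<and> (y \<longlongrightarrow> ey) at_top \<and>
        (v \<longlongrightarrow> ev) at_top \<and> (z \<longlongrightarrow> ez) at_top)"

definition R0bar :: "real \<Rightarrow> real \<Rightarrow> real \<Rightarrow> real \<Rightarrow> real \<Rightarrow> real \<Rightarrow> real \<Rightarrow> real" where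
  "R0bar s d k dl N mu tau = s / (d * (mu / (k * exp (- dl * tau) * N)))"

definition R1bar :: "real \<Rightarrow> real \<Rightarrow> real \<Rightarrow> real \<Rightarrow> real \<Rightarrow> real \<Rightarrow> real \<Rightarrow> real \<Rightarrow> real \<Rightarrow> real" where
  "R1bar s d k dl N mu q b tau =
     s / (d * (mu / (k * exp (- dl * tau) * N)) + exp (dl * tau) * dl * (b / q))"

end

theory Submission
  imports Defs
begin

text \<open>Lyapunov's direct method with the functional
  \<open>V = E g(x*, x) + g(y*, y) + a g(v*, v) + (p/q) g(z*, z) + c \<integral>[t-\<tau>, t] g(x* v*, x v)\<close>,
  where \<open>g(u*, u) = u - u* - u* ln (u/u*)\<close>, \<open>E = exp (-\<delta>\<tau>)\<close> and \<open>c = k E\<close>. Along solutions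
  \<open>V' \<le> - E d (x - x*)\<^sup>2 / x - \<beta> z\<close>: the threshold conditions on \<open>R\<^sub>0\<close> and \<open>R\<^sub>1\<close> give the sign of
  the term linear in \<open>z\<close>, and the remaining terms are Volterra functions of three ratios whose
  product is one. Since \<open>V\<close> is nonincreasing and controls every component, the equilibrium is
  stable. For attractivity, \<open>V\<close> bounds the solution, so the components are Lipschitz and
  Barbalat's lemma gives \<open>x \<longlongrightarrow> x*\<close>; the equations then force \<open>v\<close>, \<open>y\<close> and \<open>z\<close> to their
  equilibrium values in turn. The conditions on the initial data in (ii) and (iii) are what makes
  the relevant components positive after a finite time, as the Volterra terms require.\<close>

lemma real_mvt_within:
  fixes f :: "real \<Rightarrow> real"
  assumes "a \<le> b" "\<And>t. t \<in> {a..b} \<Longrightarrow> (f has_real_derivative f' t) (at t within {a..b})"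
  shows "\<exists>\<xi>\<in>{a..b}. f b - f a = f' \<xi> * (b - a)"
proof -
  have "\<exists>\<xi>\<in>{a..b}. f b - f a = (\<lambda>h. f' \<xi> * h) (b - a)"
    by (rule mvt_very_simple[OF assms(1)])
       (use assms(2) in \<open>auto simp: has_field_derivative_def\<close>)
  then show ?thesis by auto
qed

lemma DERIV_within_nonpos_imp_le:
  fixes f :: "real \<Rightarrow> real"
  assumes "a \<le> b" "\<And>t. t \<in> {a..b} \<Longrightarrow> (f has_real_derivative f' t) (at t within {a..b})"
    "\<And>t. t \<in> {a..b} \<Longrightarrow> f' t \<le> 0"
  shows "f b \<le> f a"
proof -
  obtain \<xi> where "\<xi> \<in> {a..b}" "f b - f a = f' \<xi> * (b - a)"
    using real_mvt_within[OF assms(1,2)] by blast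
  with assms(1,3) show ?thesis by (smt (verit) mult_nonpos_nonneg)
qed

lemma DERIV_within_nonneg_imp_le:
  fixes f :: "real \<Rightarrow> real"
  assumes "a \<le> b" "\<And>t. t \<in> {a..b} \<Longrightarrow> (f has_real_derivative f' t) (at t within {a..b})"
    "\<And>t. t \<in> {a..b} \<Longrightarrow> f' t \<ge> 0"
  shows "f a \<le> f b"
  using DERIV_within_nonpos_imp_le[of a b "\<lambda>t. - f t" "\<lambda>t. - f' t"] assms
  by (auto intro: DERIV_minus)

lemma DERIV_within_pos_imp_less:
  fixes f :: "real \<Rightarrow> real"
  assumes "a < b" "\<And>t. t \<in> {a..b} \<Longrightarrow> (f has_real_derivative f' t) (at t within {a..b})"
    "\<And>t. t \<in> {a..b} \<Longrightarrow> f' t > 0"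
  shows "f a < f b"
proof -
  obtain \<xi> where "\<xi> \<in> {a..b}" "f b - f a = f' \<xi> * (b - a)"
    using real_mvt_within[OF less_imp_le[OF assms(1)] assms(2)] by blast
  with assms(1,3) show ?thesis by (smt (verit) mult_pos_pos)
qed

lemma DERIV_within_Ici_if_Icc:
  fixes f :: "real \<Rightarrow> real"
  assumes "(f has_real_derivative D) (at t within {T..B})" "t < B"
  shows "(f has_real_derivative D) (at t within {T..})"
proof -
  have "at t within {T..B} = at t within {T..}"
    by (rule at_within_nhd[of t "{..<B}"]) (use assms(2) in auto)
  then show ?thesis using assms(1) by simp
qed

text \<open>Solutions of \<open>u' = g - a u\<close> with \<open>g \<ge> 0\<close> keep their sign, since \<open>u\<close> times the
  integrating factor \<open>exp (\<integral> a)\<close> is nondecreasing.\<close>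

lemma linear_ode_integrating_factor:
  fixes u a g :: "real \<Rightarrow> real"
  assumes du: "\<And>t. t \<in> {lo..hi} \<Longrightarrow> (u has_real_derivative (g t - a t * u t)) (at t within {lo..hi})"
    and ca: "continuous_on {lo..hi} a" and t: "t \<in> {lo..hi}"
  shows "((\<lambda>t. u t * exp (integral {lo..t} a)) has_real_derivative g t * exp (integral {lo..t} a))
           (at t within {lo..hi})"
proof -
  have "((\<lambda>t. exp (integral {lo..t} a)) has_real_derivative exp (integral {lo..t} a) * a t)
          (at t within {lo..hi})"
    by (rule DERIV_chain2[OF DERIV_exp integral_has_real_derivative[OF ca t]])
  from DERIV_mult[OF du[OF t] this] show ?thesis
    by (rule DERIV_cong) (simp add: algebra_simps)
qed

lemma
  fixes u a g :: "real \<Rightarrow> real"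
  assumes "lo \<le> hi"
    and du: "\<And>t. t \<in> {lo..hi} \<Longrightarrow> (u has_real_derivative (g t - a t * u t)) (at t within {lo..hi})"
    and ca: "continuous_on {lo..hi} a"
    and g: "\<And>t. t \<in> {lo..hi} \<Longrightarrow> g t \<ge> 0"
  shows linear_ode_nonneg: "u lo \<ge> 0 \<Longrightarrow> u hi \<ge> 0"
    and linear_ode_pos: "u lo > 0 \<Longrightarrow> u hi > 0"
    and linear_ode_becomes_pos:
      "u lo \<ge> 0 \<Longrightarrow> lo < hi \<Longrightarrow> (\<And>t. t \<in> {lo<..hi} \<Longrightarrow> g t > 0) \<Longrightarrow> u hi > 0"
proof -
  define W where "W t = u t * exp (integral {lo..t} a)" for t
  have dW: "(W has_real_derivative (g t * exp (integral {lo..t} a))) (at t within {r..r'})"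
    if "lo \<le> r" "r' \<le> hi" "t \<in> {r..r'}" for r r' t
    unfolding W_def using that
    by (intro has_field_derivative_subset[OF linear_ode_integrating_factor[OF du ca]]) auto
  have mono: "W r \<le> W r'" if "lo \<le> r" "r \<le> r'" "r' \<le> hi" for r r'
    by (rule DERIV_within_nonneg_imp_le[OF \<open>r \<le> r'\<close> dW]) (use that g in auto)
  have W_lo: "W lo = u lo" by (simp add: W_def)
  have sgn: "u hi > 0 \<longleftrightarrow> W hi > 0" "u hi \<ge> 0 \<longleftrightarrow> W hi \<ge> 0"
    by (simp_all add: W_def zero_less_mult_iff zero_le_mult_iff)
  show "u lo \<ge> 0 \<Longrightarrow> u hi \<ge> 0" "u lo > 0 \<Longrightarrow> u hi > 0"
    using mono[of lo hi] assms(1) W_lo sgn by auto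
  assume h: "u lo \<ge> 0" "lo < hi" "\<And>t. t \<in> {lo<..hi} \<Longrightarrow> g t > 0"
  define m where "m = (lo + hi) / 2"
  have m: "lo < m" "m < hi" using h(2) by (auto simp: m_def)
  have "W m < W hi"
    by (rule DERIV_within_pos_imp_less[OF m(2) dW]) (use m h(3) in auto)
  with mono[of lo m] m W_lo h(1) sgn show "u hi > 0" by auto
qed

section \<open>The Volterra function\<close>

text \<open>\<open>volterra u\<^sup>* u = u - u\<^sup>* - u\<^sup>* ln (u / u\<^sup>*)\<close>, written so that for \<open>u\<^sup>* = 0\<close> it is just \<open>u\<close>
  (the \<open>ln\<close> terms are multiplied by \<open>0\<close>); this handles the vanishing components of
  boundary equilibria uniformly.\<close>

definition volterra :: "real \<Rightarrow> real \<Rightarrow> real" where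
  "volterra us u = u - us * ln u - (us - us * ln us)"

lemma volterra_zero [simp]: "volterra 0 u = u"
  by (simp add: volterra_def)

lemma volterra_eq_ratio:
  assumes "us > 0" "u > 0"
  shows "volterra us u = us * (u / us - 1 - ln (u / us))"
  using assms by (simp add: volterra_def ln_div algebra_simps)

lemma sqrt_minus_one_squared_le:
  assumes "w > 0"
  shows "(sqrt w - 1)\<^sup>2 \<le> w - 1 - ln w"
proof -
  have "ln w = 2 * ln (sqrt w)" using assms by (simp add: ln_sqrt)
  also have "\<dots> \<le> 2 * (sqrt w - 1)" using ln_le_minus_one[of "sqrt w"] assms by simp
  finally show ?thesis
    using assms by (simp add: power2_eq_square algebra_simps)
qed

lemma volterra_ge_sqrt:
  assumes "us > 0" "u > 0"
  shows "us * (sqrt (u / us) - 1)\<^sup>2 \<le> volterra us u"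
  using sqrt_minus_one_squared_le[of "u / us"] assms by (simp add: volterra_eq_ratio)

lemma volterra_nonneg:
  assumes "us \<ge> 0" "u \<ge> 0" "us > 0 \<Longrightarrow> u > 0"
  shows "volterra us u \<ge> 0"
proof (cases "us = 0")
  case False
  with assms have "us > 0" "u > 0" by auto
  with volterra_ge_sqrt[OF this] show ?thesis
    by (smt (verit) mult_nonneg_nonneg zero_le_power2)
qed (use assms in simp)

lemma volterra_le_square:
  assumes "us > 0" "u > 0"
  shows "volterra us u \<le> (u - us)\<^sup>2 / u"
proof -
  have "us * ln (us / u) \<le> us * (us / u - 1)"
    using ln_le_minus_one[of "us / u"] assms by (simp add: mult_left_mono)
  moreover have "volterra us u = u - us + us * ln (us / u)"
    using assms by (simp add: volterra_def ln_div algebra_simps)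
  moreover have "(u - us)\<^sup>2 / u = u - us + us * (us / u - 1)"
    using assms by (simp add: power2_eq_square field_simps)
  ultimately show ?thesis by simp
qed

lemma volterra_le_imp_le:
  assumes "us \<ge> 0" "u \<ge> 0" "us > 0 \<Longrightarrow> u > 0" "volterra us u \<le> K"
  shows "u \<le> us * (1 + sqrt (K / us))\<^sup>2 + K"
proof (cases "us = 0")
  case False
  with assms have us: "us > 0" and u: "u > 0" by auto
  have "(sqrt (u / us) - 1)\<^sup>2 \<le> K / us"
    using volterra_ge_sqrt[OF us u] us assms(4) by (simp add: field_simps)
  then have "sqrt (u / us) \<le> 1 + sqrt (K / us)"
    by (smt (verit) real_le_rsqrt real_sqrt_abs)
  then have "(sqrt (u / us))\<^sup>2 \<le> (1 + sqrt (K / us))\<^sup>2"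
    by (rule power_mono) (use us u in simp)
  then have "u \<le> us * (1 + sqrt (K / us))\<^sup>2"
    using us u by (simp add: field_simps)
  moreover have "K \<ge> 0" using volterra_nonneg[of us u] assms us by simp
  ultimately show ?thesis by simp
qed (use assms in simp)

lemma volterra_le_imp_near:
  assumes "us > 0" "u > 0" "e \<ge> 0" "volterra us u \<le> us * e\<^sup>2"
  shows "\<bar>u - us\<bar> \<le> us * (e * (e + 2))"
proof -
  have "(sqrt (u / us) - 1)\<^sup>2 \<le> e\<^sup>2"
    using volterra_ge_sqrt[OF assms(1,2)] assms(1,4) by (smt (verit) mult_le_cancel_left_pos)
  then have a: "\<bar>sqrt (u / us) - 1\<bar> \<le> e"
    using assms(3) by (metis power2_le_imp_le power2_abs)
  have "u / us - 1 = (sqrt (u / us) - 1) * (sqrt (u / us) + 1)"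
    using assms by (simp add: algebra_simps)
  moreover have "sqrt (u / us) \<ge> 0" using assms by simp
  ultimately have "\<bar>u / us - 1\<bar> = \<bar>sqrt (u / us) - 1\<bar> * (sqrt (u / us) + 1)"
    by (simp add: abs_mult)
  also have "\<dots> \<le> e * (e + 2)"
    by (rule mult_mono[OF a]) (use a assms in auto)
  finally have "\<bar>u / us - 1\<bar> \<le> e * (e + 2)" .
  moreover have "\<bar>u - us\<bar> = us * \<bar>u / us - 1\<bar>"
    using assms(1) by (simp add: field_simps abs_mult[symmetric])
  ultimately show ?thesis using assms(1) by (simp add: mult_left_mono)
qed

lemma volterra_small_imp_near:
  assumes "us \<ge> 0" "\<epsilon> > 0"
  obtains r where "r > 0"
    "\<And>u. u \<ge> 0 \<Longrightarrow> (us > 0 \<Longrightarrow> u > 0) \<Longrightarrow> volterra us u \<le> r \<Longrightarrow> \<bar>u - us\<bar> < \<epsilon>"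
proof (cases "us = 0")
  case True
  then show ?thesis using assms that[of "\<epsilon> / 2"] by auto
next
  case False
  then have us: "us > 0" using assms by simp
  define e where "e = min 1 (\<epsilon> / (4 * us))"
  have e: "e > 0" "e \<le> 1" "e \<le> \<epsilon> / (4 * us)" using us assms by (auto simp: e_def)
  have "us * (e * (e + 2)) \<le> us * (e * 3)"
    using e us by (intro mult_left_mono) auto
  also have "\<dots> < e * (4 * us)" using e us by simp
  also have "\<dots> \<le> \<epsilon>" using e(3) us by (simp add: field_simps)
  finally have "us * (e * (e + 2)) < \<epsilon>" .
  then show ?thesis
    using that[of "us * e\<^sup>2"] us e volterra_le_imp_near[OF us _ less_imp_le[OF e(1)]] by fastforce
qed

lemma volterra_le_if_near:
  assumes "us \<ge> 0" "u \<ge> 0" "\<bar>u - us\<bar> \<le> \<eta>" "\<eta> \<le> 1" "us > 0 \<Longrightarrow> \<eta> \<le> us / 2"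
  shows "volterra us u \<le> \<eta> * (1 + 2 / us)"
proof (cases "us = 0")
  case False
  then have us: "us > 0" and \<eta>: "\<eta> \<le> us / 2" using assms by auto
  have u: "u \<ge> us / 2" using assms(3) \<eta> by (simp add: abs_le_iff)
  have "volterra us u \<le> (u - us)\<^sup>2 / u" using volterra_le_square[OF us] u us by simp
  also have "\<dots> \<le> \<eta>\<^sup>2 / (us / 2)"
  proof (rule frac_le)
    show "(u - us)\<^sup>2 \<le> \<eta>\<^sup>2" using assms(3) by (metis abs_ge_zero power2_abs power_mono)
  qed (use us u in auto)
  also have "\<dots> = \<eta> * (2 * \<eta> / us)" using us by (simp add: field_simps power2_eq_square)
  also have "\<dots> \<le> \<eta> * (1 + 2 / us)"
  proof (rule mult_left_mono)
    have "2 * \<eta> / us \<le> 2 / us" using assms(4) us by (simp add: divide_right_mono)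
    then show "2 * \<eta> / us \<le> 1 + 2 / us" by simp
  qed (use assms(3) in auto)
  finally show ?thesis .
qed (use assms in simp)

lemma has_real_derivative_volterra:
  assumes "(u has_real_derivative u') (at t within S)" "us = 0 \<or> u t > 0"
  shows "((\<lambda>t. volterra us (u t)) has_real_derivative (1 - us / u t) * u') (at t within S)"
proof (cases "us = 0")
  case False
  then have ut: "u t > 0" using assms(2) by simp
  have "((\<lambda>t. u t - us * ln (u t) - (us - us * ln us)) has_real_derivative u' - us * (u' / u t) - 0)
          (at t within S)"
    by (intro DERIV_diff DERIV_cmult DERIV_const assms(1)
          DERIV_chain2[OF DERIV_ln_divide[OF ut] assms(1), THEN DERIV_cong]) auto
  then show ?thesis unfolding volterra_def by (simp add: algebra_simps)
qed (use assms in simp)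

lemma continuous_on_volterra:
  assumes "continuous_on S u" "us = 0 \<or> (\<forall>t\<in>S. u t > 0)"
  shows "continuous_on S (\<lambda>t. volterra us (u t))"
  using assms unfolding volterra_def by (cases "us = 0") (auto intro!: continuous_intros)

section \<open>Lipschitz functions on half-lines and Barbalat's lemma\<close>

definition lipschitz_from :: "real \<Rightarrow> (real \<Rightarrow> real) \<Rightarrow> bool" where
  "lipschitz_from T f \<longleftrightarrow> (\<exists>L. L-lipschitz_on {T..} f)"

lemma lipschitz_from_const [simp]: "lipschitz_from T (\<lambda>t. c)"
  unfolding lipschitz_from_def using lipschitz_on_constant by blast

lemma lipschitz_from_add:
  "lipschitz_from T f \<Longrightarrow> lipschitz_from T g \<Longrightarrow> lipschitz_from T (\<lambda>t. f t + g t)"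
  unfolding lipschitz_from_def by (blast intro: lipschitz_on_add)

lemma lipschitz_from_diff:
  "lipschitz_from T f \<Longrightarrow> lipschitz_from T g \<Longrightarrow> lipschitz_from T (\<lambda>t. f t - g t)"
  unfolding lipschitz_from_def by (blast intro: lipschitz_on_diff)

lemma lipschitz_from_cmult: "lipschitz_from T f \<Longrightarrow> lipschitz_from T (\<lambda>t. c * f t)"
  unfolding lipschitz_from_def by (blast intro: lipschitz_on_cmult_real)

lemma lipschitz_from_mono: "lipschitz_from T f \<Longrightarrow> T \<le> T' \<Longrightarrow> lipschitz_from T' f"
  unfolding lipschitz_from_def by (meson atLeast_subset_iff lipschitz_on_subset)

lemma lipschitz_from_shift:
  assumes "lipschitz_from T f"
  shows "lipschitz_from (T + c) (\<lambda>t. f (t - c))"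
proof -
  obtain L where L: "L-lipschitz_on {T..} f" using assms lipschitz_from_def by blast
  have "(L * 1)-lipschitz_on {T + c..} (\<lambda>t. f (t - c))"
    by (rule lipschitz_on_compose2[OF _ lipschitz_on_subset[OF L]])
       (auto intro!: lipschitz_onI simp: dist_real_def)
  then show ?thesis unfolding lipschitz_from_def by blast
qed

lemma lipschitz_from_mult:
  assumes "lipschitz_from T f" "lipschitz_from T g" "bounded (f ` {T..})" "bounded (g ` {T..})"
  shows "lipschitz_from T (\<lambda>t. f t * g t)"
proof -
  obtain L1 L2 where L1: "L1-lipschitz_on {T..} f" and L2: "L2-lipschitz_on {T..} g"
    using assms(1,2) lipschitz_from_def by blast
  obtain M1 M2 where M1: "\<And>t. t \<ge> T \<Longrightarrow> \<bar>f t\<bar> \<le> M1" and M2: "\<And>t. t \<ge> T \<Longrightarrow> \<bar>g t\<bar> \<le> M2"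
    using assms(3,4) by (auto simp: bounded_real)
  have "(M1 * L2 + M2 * L1)-lipschitz_on {T..} (\<lambda>t. f t * g t)"
  proof (rule lipschitz_onI)
    fix t t' assume t: "t \<in> {T..}" "t' \<in> {T..}"
    have "f t * g t - f t' * g t' = f t * (g t - g t') + g t' * (f t - f t')"
      by (simp add: algebra_simps)
    then have "\<bar>f t * g t - f t' * g t'\<bar> \<le> \<bar>f t\<bar> * \<bar>g t - g t'\<bar> + \<bar>g t'\<bar> * \<bar>f t - f t'\<bar>"
      by (metis abs_mult abs_triangle_ineq)
    also have "\<dots> \<le> M1 * (L2 * \<bar>t - t'\<bar>) + M2 * (L1 * \<bar>t - t'\<bar>)"
      using lipschitz_onD[OF L1 t] lipschitz_onD[OF L2 t] M1[of t] M2[of t'] t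
      by (intro add_mono mult_mono) (auto simp: dist_real_def)
    finally show "dist (f t * g t) (f t' * g t') \<le> (M1 * L2 + M2 * L1) * dist t t'"
      by (simp add: dist_real_def algebra_simps)
  next
    show "0 \<le> M1 * L2 + M2 * L1"
      using M1[of T] M2[of T] lipschitz_on_nonneg[OF L1] lipschitz_on_nonneg[OF L2] by simp
  qed
  then show ?thesis unfolding lipschitz_from_def by blast
qed

lemma lipschitz_from_DERIV:
  assumes "\<And>t. t \<ge> T \<Longrightarrow> (f has_real_derivative f' t) (at t within {T..})" "bounded (f' ` {T..})"
  shows "lipschitz_from T f"
proof -
  obtain M where M: "\<And>t. t \<ge> T \<Longrightarrow> \<bar>f' t\<bar> \<le> M" using assms(2) by (auto simp: bounded_real)
  have *: "\<bar>f t' - f t\<bar> \<le> M * (t' - t)" if "T \<le> t" "t \<le> t'" for t t'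
  proof -
    have "(f has_real_derivative f' \<theta>) (at \<theta> within {t..t'})" if "\<theta> \<in> {t..t'}" for \<theta>
      using that \<open>T \<le> t\<close> by (intro has_field_derivative_subset[OF assms(1)]) auto
    then obtain \<xi> where \<xi>: "\<xi> \<in> {t..t'}" "f t' - f t = f' \<xi> * (t' - t)"
      using real_mvt_within[OF \<open>t \<le> t'\<close>] by blast
    have "\<bar>f t' - f t\<bar> = \<bar>f' \<xi>\<bar> * (t' - t)" using \<xi> that by (simp add: abs_mult)
    also have "\<dots> \<le> M * (t' - t)" using M[of \<xi>] \<xi> that by (intro mult_right_mono) auto
    finally show ?thesis .
  qed
  have "M-lipschitz_on {T..} f"
  proof (rule lipschitz_onI)
    fix t t' assume "t \<in> {T..}" "t' \<in> {T..}"
    then show "dist (f t) (f t') \<le> M * dist t t'"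
      using *[of t t'] *[of t' t] by (cases "t \<le> t'") (auto simp: dist_real_def abs_minus_commute)
  next
    show "0 \<le> M" using M[of T] by simp
  qed
  then show ?thesis unfolding lipschitz_from_def by blast
qed

lemma uniformly_continuous_on_lipschitz_from:
  "lipschitz_from T f \<Longrightarrow> uniformly_continuous_on {T..} f"
  unfolding lipschitz_from_def by (blast intro: lipschitz_on_uniformly_continuous)

lemma bounded_mult_comp_real:
  fixes f g :: "'a \<Rightarrow> real"
  assumes "bounded (f ` S)" "bounded (g ` S)"
  shows "bounded ((\<lambda>t. f t * g t) ` S)"
proof -
  obtain M1 M2 where "\<And>t. t \<in> S \<Longrightarrow> \<bar>f t\<bar> \<le> M1" "\<And>t. t \<in> S \<Longrightarrow> \<bar>g t\<bar> \<le> M2"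
    using assms by (auto simp: bounded_real)
  then have "\<And>t. t \<in> S \<Longrightarrow> \<bar>f t * g t\<bar> \<le> M1 * M2"
    unfolding abs_mult by (meson abs_ge_zero mult_mono order.trans)
  then show ?thesis by (auto simp: bounded_real)
qed

lemma bounded_const_comp [simp]: "bounded ((\<lambda>t. c) ` S)"
  by (rule bounded_subset[of "{c}"]) auto

lemma bounded_shift_comp:
  fixes f :: "real \<Rightarrow> real"
  assumes "bounded (f ` {T..})"
  shows "bounded ((\<lambda>t. f (t - c)) ` {T + c..})"
  by (rule bounded_subset[OF assms]) force

lemma bounded_comp_Ici_mono:
  fixes f :: "real \<Rightarrow> real"
  shows "bounded (f ` {T..}) \<Longrightarrow> T \<le> T' \<Longrightarrow> bounded (f ` {T'..})"
  by (erule bounded_subset) auto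

lemma not_tendsto_zero_frequently_large:
  fixes g :: "real \<Rightarrow> real"
  assumes "\<not> (g \<longlongrightarrow> 0) at_top"
  obtains \<epsilon> where "\<epsilon> > 0" "\<And>N. \<exists>t\<ge>N. \<bar>g t\<bar> \<ge> \<epsilon>"
proof -
  have "\<not> (\<forall>\<epsilon>>0. \<exists>N. \<forall>t\<ge>N. \<bar>g t\<bar> < \<epsilon>)"
    using assms by (auto simp: tendsto_iff eventually_at_top_linorder dist_real_def)
  then show ?thesis using that by (meson not_le)
qed

lemma uniformly_continuous_window:
  fixes g :: "real \<Rightarrow> real"
  assumes "uniformly_continuous_on {T..} g" "\<epsilon> > 0" "\<And>N. \<exists>t\<ge>N. \<bar>g t\<bar> \<ge> \<epsilon>"
  obtains h where "h > 0" "\<And>N. \<exists>t\<ge>N. \<forall>\<theta>\<in>{t..t+h}. \<bar>g \<theta>\<bar> \<ge> \<epsilon> / 2"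
proof -
  obtain h where h: "h > 0"
    "\<And>t t'. t \<in> {T..} \<Longrightarrow> t' \<in> {T..} \<Longrightarrow> dist t' t < h \<Longrightarrow> dist (g t') (g t) < \<epsilon> / 2"
    using assms(1,2) unfolding uniformly_continuous_on_def by (meson half_gt_zero)
  have "\<exists>t\<ge>N. \<forall>\<theta>\<in>{t..t + h / 2}. \<bar>g \<theta>\<bar> \<ge> \<epsilon> / 2" for N
  proof -
    obtain t where t: "t \<ge> max T N" "\<bar>g t\<bar> \<ge> \<epsilon>" using assms(3) by blast
    have "\<bar>g \<theta>\<bar> \<ge> \<epsilon> / 2" if "\<theta> \<in> {t..t + h / 2}" for \<theta>
    proof -
      have "dist \<theta> t < h" using that h(1) by (simp add: dist_real_def)
      then have "\<bar>g \<theta> - g t\<bar> < \<epsilon> / 2"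
        using h(2)[of t \<theta>] that t(1) by (simp add: dist_real_def)
      then show ?thesis using t(2) by linarith
    qed
    then show ?thesis using t(1) by auto
  qed
  then show ?thesis using that[of "h / 2"] h(1) by simp
qed

lemma barbalat:
  fixes f g :: "real \<Rightarrow> real"
  assumes lim: "(f \<longlongrightarrow> L) at_top"
    and der: "\<And>t. t \<ge> T \<Longrightarrow> (f has_real_derivative g t) (at t within {T..})"
    and uc: "uniformly_continuous_on {T..} g"
  shows "(g \<longlongrightarrow> 0) at_top"
proof (rule ccontr)
  assume "\<not> ?thesis"
  then obtain \<epsilon> where \<epsilon>: "\<epsilon> > 0" "\<And>N. \<exists>t\<ge>N. \<bar>g t\<bar> \<ge> \<epsilon>"
    using not_tendsto_zero_frequently_large by blast
  obtain h where h: "h > 0" "\<And>N. \<exists>t\<ge>N. \<forall>\<theta>\<in>{t..t+h}. \<bar>g \<theta>\<bar> \<ge> \<epsilon> / 2"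
    using uniformly_continuous_window[OF uc \<epsilon>] by blast
  have "\<epsilon> * h / 4 > 0" using \<epsilon>(1) h(1) by simp
  then have "\<forall>\<^sub>F t in at_top. dist (f t) L < \<epsilon> * h / 4"
    using lim unfolding tendsto_iff by blast
  then obtain T1 where T1: "\<And>t. t \<ge> T1 \<Longrightarrow> \<bar>f t - L\<bar> < \<epsilon> * h / 4"
    by (auto simp: eventually_at_top_linorder dist_real_def)
  obtain t where t: "t \<ge> max T T1" "\<And>\<theta>. \<theta> \<in> {t..t+h} \<Longrightarrow> \<bar>g \<theta>\<bar> \<ge> \<epsilon> / 2"
    using h(2) by blast
  have "(f has_real_derivative g \<theta>) (at \<theta> within {t..t+h})" if "\<theta> \<in> {t..t+h}" for \<theta>
    using that t(1) by (intro has_field_derivative_subset[OF der]) auto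
  then obtain \<xi> where \<xi>: "\<xi> \<in> {t..t+h}" "f (t+h) - f t = g \<xi> * h"
    using real_mvt_within[of t "t + h" f g] h(1) by auto
  have "\<epsilon> / 2 * h \<le> \<bar>f (t+h) - f t\<bar>"
    using t(2)[OF \<xi>(1)] \<xi>(2) h(1) by (simp add: abs_mult mult_right_mono)
  moreover have "\<bar>f (t+h) - L\<bar> < \<epsilon> * h / 4" "\<bar>f t - L\<bar> < \<epsilon> * h / 4"
    using T1[of t] T1[of "t+h"] t(1) h(1) by auto
  ultimately show False by linarith
qed

text \<open>Since \<open>V\<close> is bounded below, \<open>\<integral> f < \<infinity>\<close>, which for uniformly continuous \<open>f \<ge> 0\<close> forces
  \<open>f \<longlongrightarrow> 0\<close>.\<close>

lemma barbalat_lyapunov: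
  fixes V D f :: "real \<Rightarrow> real"
  assumes der: "\<And>t. t \<ge> T \<Longrightarrow> (V has_real_derivative D t) (at t within {T..})"
    and Df: "\<And>t. t \<ge> T \<Longrightarrow> D t \<le> - f t"
    and f_nonneg: "\<And>t. t \<ge> T \<Longrightarrow> f t \<ge> 0"
    and V_lower: "\<And>t. t \<ge> T \<Longrightarrow> V t \<ge> m"
    and uc: "uniformly_continuous_on {T..} f"
  shows "(f \<longlongrightarrow> 0) at_top"
proof (rule ccontr)
  assume "\<not> ?thesis"
  then obtain \<epsilon> where \<epsilon>: "\<epsilon> > 0" "\<And>N. \<exists>t\<ge>N. \<bar>f t\<bar> \<ge> \<epsilon>"
    using not_tendsto_zero_frequently_large by blast
  obtain h where h: "h > 0" "\<And>N. \<exists>t\<ge>N. \<forall>\<theta>\<in>{t..t+h}. \<bar>f \<theta>\<bar> \<ge> \<epsilon> / 2"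
    using uniformly_continuous_window[OF uc \<epsilon>] by blast
  have der': "(V has_real_derivative D \<theta>) (at \<theta> within {a..b})" if "T \<le> a" "\<theta> \<in> {a..b}" for a b \<theta>
    using that by (intro has_field_derivative_subset[OF der]) auto
  have mono: "V b \<le> V a" if "T \<le> a" "a \<le> b" for a b
  proof (rule DERIV_within_nonpos_imp_le[OF that(2) der'[OF that(1)]])
    fix t assume "t \<in> {a..b}"
    then show "D t \<le> 0" using that Df[of t] f_nonneg[of t] by auto
  qed
  have bdd: "bdd_below (V ` {T..})" using V_lower by (auto intro!: bdd_belowI[of _ m])
  obtain t0 where t0: "t0 \<ge> T" "V t0 < Inf (V ` {T..}) + \<epsilon> * h / 2"
    using cInf_less_iff[OF _ bdd, of "Inf (V ` {T..}) + \<epsilon> * h / 2"] \<epsilon> h by auto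
  obtain t where t: "t \<ge> t0" "\<And>\<theta>. \<theta> \<in> {t..t+h} \<Longrightarrow> \<bar>f \<theta>\<bar> \<ge> \<epsilon> / 2"
    using h(2) by blast
  have "V (t+h) + \<epsilon> / 2 * (t+h) \<le> V t + \<epsilon> / 2 * t"
  proof (rule DERIV_within_nonpos_imp_le[where f = "\<lambda>\<theta>. V \<theta> + \<epsilon> / 2 * \<theta>"])
    fix \<theta> assume \<theta>: "\<theta> \<in> {t..t+h}"
    show "((\<lambda>\<theta>. V \<theta> + \<epsilon> / 2 * \<theta>) has_real_derivative D \<theta> + \<epsilon> / 2) (at \<theta> within {t..t+h})"
      using der'[of t \<theta> "t+h"] \<theta> t t0 by (auto intro!: derivative_eq_intros)
    show "D \<theta> + \<epsilon> / 2 \<le> 0" using Df[of \<theta>] f_nonneg[of \<theta>] t(2)[OF \<theta>] \<theta> t t0 by auto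
  qed (use h in simp)
  then have "V (t+h) \<le> V t - \<epsilon> / 2 * h" by (simp add: distrib_left)
  moreover have "V t \<le> V t0" using mono t t0 by auto
  moreover have "Inf (V ` {T..}) \<le> V (t+h)" using bdd t t0 h by (auto intro!: cInf_lower)
  ultimately show False using t0 by (simp add: algebra_simps)
qed

section \<open>Positivity of solutions\<close>

lemma continuous_on_Icc_if_Ici:
  "continuous_on {a..} (f :: real \<Rightarrow> real) \<Longrightarrow> a \<le> lo \<Longrightarrow> continuous_on {lo..hi} f"
  by (erule continuous_on_subset) auto

locale virus_solution =
  fixes s d k dl p N mu q b tau :: real and x y v z :: "real \<Rightarrow> real"
  assumes pos: "s > 0" "d > 0" "k > 0" "dl > 0" "p > 0" "N > 0" "mu > 0" "q > 0" "b > 0" "tau > 0"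
    and solution: "is_solution s d k dl p N mu q b tau x y v z"
    and admissible: "admissible tau x y v z"
begin

abbreviation "c \<equiv> k * exp (- dl * tau)"

lemma c_pos: "c > 0"
  using pos by simp

lemma continuous_x: "continuous_on {-tau..} x" and continuous_v: "continuous_on {-tau..} v"
  and continuous_y: "continuous_on {0..} y" and continuous_z: "continuous_on {0..} z"
  using solution unfolding is_solution_def by auto

lemma continuous_xv: "continuous_on {-tau..} (\<lambda>\<theta>. x \<theta> * v \<theta>)"
  using continuous_x continuous_v by (intro continuous_intros)

context
  fixes t :: real and S :: "real set"
  assumes t: "t \<in> S" and S: "S \<subseteq> {0..}"
begin

lemma x_deriv: "(x has_real_derivative s - d * x t - k * x t * v t) (at t within S)"
  and y_deriv: "(y has_real_derivative c * x (t - tau) * v (t - tau) - dl * y t - p * y t * z t)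
                  (at t within S)"
  and v_deriv: "(v has_real_derivative N * dl * y t - mu * v t) (at t within S)"
  and z_deriv: "(z has_real_derivative q * y t * z t - b * z t) (at t within S)"
  using solution t S unfolding is_solution_def
  by (auto intro: has_field_derivative_subset simp: mult.assoc)

end

lemma x_init_nonneg: "t \<in> {-tau..0} \<Longrightarrow> x t \<ge> 0"
  and v_init_nonneg: "t \<in> {-tau..0} \<Longrightarrow> v t \<ge> 0"
  and y0_nonneg: "y 0 \<ge> 0" and z0_nonneg: "z 0 \<ge> 0"
  using admissible unfolding admissible_def by auto

context
  fixes t0 t t1 :: real
  assumes t0: "0 \<le> t0" and t: "t \<in> {t0..t1}"
begin

lemma x_deriv_linear: "(x has_real_derivative s - (d + k * v t) * x t) (at t within {t0..t1})"
  using x_deriv[OF t] t0 by (simp add: algebra_simps)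

lemma y_deriv_linear:
  "(y has_real_derivative c * x (t - tau) * v (t - tau) - (dl + p * z t) * y t) (at t within {t0..t1})"
  using y_deriv[OF t] t0 by (simp add: algebra_simps)

lemma v_deriv_linear: "(v has_real_derivative N * dl * y t - mu * v t) (at t within {t0..t1})"
  using v_deriv[OF t] t0 by simp

lemma z_deriv_linear: "(z has_real_derivative 0 - (b - q * y t) * z t) (at t within {t0..t1})"
  using z_deriv[OF t] t0 by (simp add: algebra_simps)

end

lemma continuous_x_rate: "0 \<le> t0 \<Longrightarrow> continuous_on {t0..t1} (\<lambda>t. d + k * v t)"
  and continuous_y_rate: "0 \<le> t0 \<Longrightarrow> continuous_on {t0..t1} (\<lambda>t. dl + p * z t)"
  and continuous_z_rate: "0 \<le> t0 \<Longrightarrow> continuous_on {t0..t1} (\<lambda>t. b - q * y t)"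
  using continuous_on_Icc_if_Ici[OF continuous_v, of t0 t1]
    continuous_on_Icc_if_Ici[OF continuous_z, of t0 t1]
    continuous_on_Icc_if_Ici[OF continuous_y, of t0 t1] pos
  by (auto intro!: continuous_intros)

lemma x_nonneg: "t \<ge> -tau \<Longrightarrow> x t \<ge> 0"
  using linear_ode_nonneg[where lo = 0 and hi = t and u = x and g = "\<lambda>_. s" and a = "\<lambda>t. d + k * v t"]
    x_init_nonneg[of t] x_init_nonneg[of 0] x_deriv_linear continuous_x_rate pos
  by (cases "t \<le> 0") auto

lemma x_pos: "t > 0 \<Longrightarrow> x t > 0"
  using linear_ode_becomes_pos[where lo = 0 and u = x and g = "\<lambda>_. s" and a = "\<lambda>t. d + k * v t"]
    x_init_nonneg[of 0] x_deriv_linear continuous_x_rate pos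
  by auto

text \<open>Nonnegativity of \<open>y\<close> and \<open>v\<close> by the method of steps: on \<open>[0, (n+1)\<tau>]\<close> the delayed
  source of \<open>y\<close> only involves values on \<open>[-\<tau>, n\<tau>]\<close>.\<close>

lemma yv_nonneg_steps: "\<forall>t\<in>{0..real n * tau}. y t \<ge> 0 \<and> v t \<ge> 0"
proof (induction n)
  case 0
  then show ?case using y0_nonneg v_init_nonneg[of 0] pos by auto
next
  case (Suc n)
  have source: "c * x (\<theta> - tau) * v (\<theta> - tau) \<ge> 0" if "\<theta> \<in> {0..real (Suc n) * tau}" for \<theta>
  proof -
    have "v (\<theta> - tau) \<ge> 0"
      using Suc.IH v_init_nonneg[of "\<theta> - tau"] that by (cases "\<theta> - tau \<le> 0") (auto simp: algebra_simps)
    then show ?thesis using x_nonneg[of "\<theta> - tau"] c_pos that by simp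
  qed
  have y: "y t \<ge> 0" if "t \<in> {0..real (Suc n) * tau}" for t
    by (rule linear_ode_nonneg[where lo = 0 and u = y and g = "\<lambda>\<theta>. c * x (\<theta> - tau) * v (\<theta> - tau)"
         and a = "\<lambda>t. dl + p * z t"])
       (use that y0_nonneg y_deriv_linear continuous_y_rate source in auto)
  have "v t \<ge> 0" if "t \<in> {0..real (Suc n) * tau}" for t
    by (rule linear_ode_nonneg[where lo = 0 and u = v and g = "\<lambda>\<theta>. N * dl * y \<theta>" and a = "\<lambda>t. mu"])
       (use that v_init_nonneg[of 0] pos v_deriv_linear y continuous_on_const in auto)
  with y show ?case by auto
qed

lemma y_nonneg: "t \<ge> 0 \<Longrightarrow> y t \<ge> 0" and v_nonneg_pos_time: "t \<ge> 0 \<Longrightarrow> v t \<ge> 0"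
proof -
  assume "t \<ge> 0"
  obtain n where "t / tau \<le> real n" using real_arch_simple by blast
  then have "t \<le> real n * tau" using pos by (simp add: field_simps)
  with \<open>t \<ge> 0\<close> show "y t \<ge> 0" "v t \<ge> 0" using yv_nonneg_steps[of n] by auto
qed

lemma v_nonneg: "t \<ge> -tau \<Longrightarrow> v t \<ge> 0"
  using v_nonneg_pos_time[of t] v_init_nonneg[of t] by (cases "t \<le> 0") auto

lemma y_source_nonneg: "\<theta> \<ge> 0 \<Longrightarrow> c * x (\<theta> - tau) * v (\<theta> - tau) \<ge> 0"
  using x_nonneg[of "\<theta> - tau"] v_nonneg[of "\<theta> - tau"] c_pos by simp

lemma z_nonneg: assumes "t \<ge> 0" shows "z t \<ge> 0"
  by (rule linear_ode_nonneg[where lo = 0 and u = z and g = "\<lambda>_. 0" and a = "\<lambda>t. b - q * y t"])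
     (use assms z0_nonneg z_deriv_linear continuous_z_rate in auto)

lemma z_pos: assumes "t \<ge> 0" "z 0 > 0" shows "z t > 0"
  by (rule linear_ode_pos[where lo = 0 and u = z and g = "\<lambda>_. 0" and a = "\<lambda>t. b - q * y t"])
     (use assms z_deriv_linear continuous_z_rate in auto)

lemma y_pos_mono: assumes "0 \<le> t0" "t0 \<le> t" "y t0 > 0" shows "y t > 0"
  by (rule linear_ode_pos[where lo = t0 and u = y and g = "\<lambda>\<theta>. c * x (\<theta> - tau) * v (\<theta> - tau)"
         and a = "\<lambda>t. dl + p * z t"])
     (use assms y_deriv_linear continuous_y_rate y_source_nonneg in auto)

lemma v_pos_mono: assumes "0 \<le> t0" "t0 \<le> t" "v t0 > 0" shows "v t > 0"
  by (rule linear_ode_pos[where lo = t0 and u = v and g = "\<lambda>\<theta>. N * dl * y \<theta>" and a = "\<lambda>t. mu"])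
     (use assms pos v_deriv_linear y_nonneg continuous_on_const in auto)

lemma v_pos_if_y_pos: assumes "0 \<le> t0" "t0 < t" "y t0 > 0" shows "v t > 0"
proof (rule linear_ode_becomes_pos[where lo = t0 and u = v and g = "\<lambda>\<theta>. N * dl * y \<theta>" and a = "\<lambda>t. mu"])
  show "v t0 \<ge> 0" using v_nonneg assms pos by auto
  fix \<theta> assume "\<theta> \<in> {t0<..t}"
  then show "N * dl * y \<theta> > 0" using y_pos_mono[of t0 \<theta>] assms pos by auto
qed (use assms pos v_deriv_linear y_nonneg continuous_on_const in auto)

lemma y_becomes_pos:
  assumes t0: "t0 \<ge> 0" and xv: "x (t0 - tau) * v (t0 - tau) > 0"
  obtains t1 where "t1 > t0" "y t1 > 0"
proof -
  have "t0 - tau \<in> {-tau..}" using t0 by auto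
  then obtain \<delta> where \<delta>: "\<delta> > 0"
    "\<And>\<theta>. \<theta> \<in> {-tau..} \<Longrightarrow> dist \<theta> (t0 - tau) < \<delta> \<Longrightarrow>
       dist (x \<theta> * v \<theta>) (x (t0 - tau) * v (t0 - tau)) < x (t0 - tau) * v (t0 - tau)"
    using continuous_xv xv unfolding continuous_on_iff by metis
  have source_pos: "c * x (\<theta> - tau) * v (\<theta> - tau) > 0" if "\<theta> \<in> {t0<..t0 + \<delta> / 2}" for \<theta>
  proof -
    have "x (\<theta> - tau) * v (\<theta> - tau) > 0"
      using \<delta>(2)[of "\<theta> - tau"] that t0 by (auto simp: dist_real_def)
    then show ?thesis using c_pos by (metis mult.assoc mult_pos_pos)
  qed
  have "y (t0 + \<delta> / 2) > 0"
  proof (rule linear_ode_becomes_pos[where lo = t0 and u = y and g = "\<lambda>\<theta>. c * x (\<theta> - tau) * v (\<theta> - tau)"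
      and a = "\<lambda>t. dl + p * z t"])
    show "t0 \<le> t0 + \<delta> / 2" "t0 < t0 + \<delta> / 2" using \<delta>(1) by auto
    show "y t0 \<ge> 0" using y_nonneg t0 by simp
    show "continuous_on {t0..t0 + \<delta> / 2} (\<lambda>t. dl + p * z t)" by (rule continuous_y_rate[OF t0])
  qed (use t0 y_deriv_linear y_source_nonneg source_pos in auto)
  then show ?thesis using that[of "t0 + \<delta> / 2"] \<delta>(1) by simp
qed

lemma eventually_positive:
  assumes "y 0 + x (-tau) * v (-tau) > 0 \<or> v 0 > 0"
  obtains T where "T \<ge> tau" "\<And>t. t \<ge> T - tau \<Longrightarrow> x t > 0 \<and> v t > 0" "\<And>t. t \<ge> T \<Longrightarrow> y t > 0"
proof -
  have "\<exists>t1\<ge>0. y t1 > 0"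
  proof (cases "y 0 > 0")
    case False
    then have y0: "y 0 = 0" using y0_nonneg by simp
    show ?thesis
    proof (cases "x (-tau) * v (-tau) > 0")
      case True
      then obtain t1 where "t1 > 0" "y t1 > 0" using y_becomes_pos[of 0] by auto
      then show ?thesis by (intro exI[of _ t1]) simp
    next
      case False
      then have "v 0 > 0" using assms y0 by auto
      then have "x (1 + tau - tau) * v (1 + tau - tau) > 0"
        using v_pos_mono[of 0 1] x_pos[of 1] by simp
      then obtain t1 where "t1 > 1 + tau" "y t1 > 0" using y_becomes_pos[of "1 + tau"] pos by auto
      then show ?thesis using pos by (intro exI[of _ t1]) simp
    qed
  qed blast
  then obtain t1 where t1: "t1 \<ge> 0" "y t1 > 0" by blast
  show ?thesis
  proof (rule that[of "t1 + tau + 1"])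
    fix t assume "t \<ge> t1 + tau + 1 - tau"
    then show "x t > 0 \<and> v t > 0" using x_pos[of t] t1 v_pos_if_y_pos[of t1 t] by simp
  next
    fix t assume "t \<ge> t1 + tau + 1"
    then show "y t > 0" using y_pos_mono[of t1 t] t1 pos by simp
  qed (use t1 in simp)
qed

end

section \<open>The Lyapunov functional\<close>

context virus_solution
begin

text \<open>The positivity that makes the Volterra terms of the functional differentiable from \<open>T\<close> on.\<close>

definition positive_from :: "real \<Rightarrow> real \<Rightarrow> real \<Rightarrow> real \<Rightarrow> real \<Rightarrow> bool" where
  "positive_from T xs ys vs zs \<longleftrightarrow> T \<ge> 0 \<and> xs > 0 \<and> ys \<ge> 0 \<and> vs \<ge> 0 \<and> zs \<ge> 0 \<and>
     (\<forall>t\<ge>T. x t > 0) \<and> (ys = 0 \<or> (\<forall>t\<ge>T. y t > 0)) \<and> (vs = 0 \<or> (\<forall>t\<ge>T. v t > 0)) \<and>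
     (zs = 0 \<or> (\<forall>t\<ge>T. z t > 0)) \<and> (xs * vs = 0 \<or> (\<forall>t\<ge>T - tau. x t * v t > 0))"

definition lyap :: "real \<Rightarrow> real \<Rightarrow> real \<Rightarrow> real \<Rightarrow> real \<Rightarrow> real \<Rightarrow> real" where
  "lyap xs ys vs zs a t = exp (- dl * tau) * volterra xs (x t) + volterra ys (y t) + a * volterra vs (v t)
     + p / q * volterra zs (z t) + c * integral {t - tau..t} (\<lambda>\<theta>. volterra (xs * vs) (x \<theta> * v \<theta>))"

definition lyap_deriv :: "real \<Rightarrow> real \<Rightarrow> real \<Rightarrow> real \<Rightarrow> real \<Rightarrow> real \<Rightarrow> real" where
  "lyap_deriv xs ys vs zs a t = exp (- dl * tau) * ((1 - xs / x t) * (s - d * x t - k * x t * v t))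
     + (1 - ys / y t) * (c * x (t - tau) * v (t - tau) - dl * y t - p * y t * z t)
     + a * ((1 - vs / v t) * (N * dl * y t - mu * v t))
     + p / q * ((1 - zs / z t) * (q * y t * z t - b * z t))
     + c * (volterra (xs * vs) (x t * v t) - volterra (xs * vs) (x (t - tau) * v (t - tau)))"

lemma continuous_on_volterra_xv:
  assumes "positive_from T xs ys vs zs" "S \<subseteq> {T - tau..}"
  shows "continuous_on S (\<lambda>\<theta>. volterra (xs * vs) (x \<theta> * v \<theta>))"
proof (rule continuous_on_volterra)
  show "continuous_on S (\<lambda>\<theta>. x \<theta> * v \<theta>)"
    using assms by (intro continuous_on_subset[OF continuous_xv]) (auto simp: positive_from_def)
  show "xs * vs = 0 \<or> (\<forall>\<theta>\<in>S. x \<theta> * v \<theta> > 0)"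
    using assms by (auto simp: positive_from_def)
qed

text \<open>The delay term is split as \<open>\<Phi> t - \<Phi> (t - \<tau>)\<close> with \<open>\<Phi>\<close> a primitive from \<open>T - \<tau>\<close>.\<close>

lemma has_real_derivative_delay_integral:
  assumes "positive_from T xs ys vs zs" "t \<ge> T"
  shows "((\<lambda>t. integral {t - tau..t} (\<lambda>\<theta>. volterra (xs * vs) (x \<theta> * v \<theta>))) has_real_derivative
            volterra (xs * vs) (x t * v t) - volterra (xs * vs) (x (t - tau) * v (t - tau)))
           (at t within {T..})"
proof -
  define F where "F \<theta> = volterra (xs * vs) (x \<theta> * v \<theta>)" for \<theta>
  define \<Phi> where "\<Phi> u = integral {T - tau..u} F" for u
  define B where "B = t + 1"
  have tB: "t < B" "t \<in> {T..B}" using assms(2) by (auto simp: B_def)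
  have cF: "continuous_on {T - tau..u} F" for u
    unfolding F_def by (rule continuous_on_volterra_xv[OF assms(1)]) auto
  have dPhi: "(\<Phi> has_real_derivative F u) (at u within {T - tau..B})" if "u \<in> {T - tau..B}" for u
    unfolding \<Phi>_def by (rule integral_has_real_derivative[OF cF that])
  have split: "integral {u - tau..u} F = \<Phi> u - \<Phi> (u - tau)" if "u \<ge> T" for u
    unfolding \<Phi>_def using that pos
    by (simp add: Henstock_Kurzweil_Integration.integral_combine[symmetric, of "T - tau" "u - tau" u]
          integrable_continuous_real[OF cF])
  have d1: "(\<Phi> has_real_derivative F t) (at t within {T..B})"
    by (rule has_field_derivative_subset[OF dPhi]) (use tB pos in auto)
  have "(\<Phi> has_real_derivative F (t - tau)) (at (t - tau) within (\<lambda>u. u - tau) ` {T..B})"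
    by (rule has_field_derivative_subset[OF dPhi]) (use tB pos in auto)
  moreover have "((\<lambda>u. u - tau) has_real_derivative 1) (at t within {T..B})"
    by (intro derivative_eq_intros) auto
  ultimately have d2: "((\<lambda>u. \<Phi> (u - tau)) has_real_derivative F (t - tau)) (at t within {T..B})"
    using DERIV_image_chain by (fastforce simp: o_def)
  have "((\<lambda>u. integral {u - tau..u} F) has_real_derivative F t - F (t - tau)) (at t within {T..B})"
    by (rule has_field_derivative_transform_within[OF DERIV_diff[OF d1 d2] zero_less_one tB(2)])
       (use split in auto)
  then show ?thesis unfolding F_def by (rule DERIV_within_Ici_if_Icc[OF _ tB(1)])
qed

lemma has_real_derivative_lyap:
  assumes ph: "positive_from T xs ys vs zs" and t: "t \<ge> T"
  shows "(lyap xs ys vs zs a has_real_derivative lyap_deriv xs ys vs zs a t) (at t within {T..})"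
proof -
  have S: "{T..} \<subseteq> {0..}" and tT: "t \<in> {T..}" using ph t by (auto simp: positive_from_def)
  have "x t > 0" "ys = 0 \<or> y t > 0" "vs = 0 \<or> v t > 0" "zs = 0 \<or> z t > 0"
    using ph t by (auto simp: positive_from_def)
  note volterra_terms = has_real_derivative_volterra[OF x_deriv[OF tT S]]
    has_real_derivative_volterra[OF y_deriv[OF tT S]] has_real_derivative_volterra[OF v_deriv[OF tT S]]
    has_real_derivative_volterra[OF z_deriv[OF tT S]]
  show ?thesis
    unfolding lyap_def[abs_def] lyap_deriv_def
    by (intro DERIV_add DERIV_cmult volterra_terms has_real_derivative_delay_integral[OF ph t])
       (use \<open>x t > 0\<close> \<open>ys = 0 \<or> y t > 0\<close> \<open>vs = 0 \<or> v t > 0\<close> \<open>zs = 0 \<or> z t > 0\<close> in auto)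
qed

lemma lyap_antimono:
  assumes ph: "positive_from T xs ys vs zs"
    and lyap_deriv_nonpos: "\<And>t. t \<ge> T \<Longrightarrow> lyap_deriv xs ys vs zs a t \<le> 0" and t: "t \<ge> T"
  shows "lyap xs ys vs zs a t \<le> lyap xs ys vs zs a T"
proof (rule DERIV_within_nonpos_imp_le[OF t])
  fix u assume "u \<in> {T..t}"
  then show "(lyap xs ys vs zs a has_real_derivative lyap_deriv xs ys vs zs a u) (at u within {T..t})"
    by (intro has_field_derivative_subset[OF has_real_derivative_lyap[OF ph]]) auto
  show "lyap_deriv xs ys vs zs a u \<le> 0" using lyap_deriv_nonpos \<open>u \<in> {T..t}\<close> by auto
qed

lemma lyap_terms_nonneg:
  assumes ph: "positive_from T xs ys vs zs" and t: "t \<ge> T"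
  shows "volterra xs (x t) \<ge> 0" "volterra ys (y t) \<ge> 0" "volterra vs (v t) \<ge> 0"
    "volterra zs (z t) \<ge> 0" "integral {t - tau..t} (\<lambda>\<theta>. volterra (xs * vs) (x \<theta> * v \<theta>)) \<ge> 0"
proof -
  have t0: "t \<ge> 0" using ph t by (simp add: positive_from_def)
  show "volterra xs (x t) \<ge> 0" using ph t by (intro volterra_nonneg) (auto simp: positive_from_def)
  show "volterra ys (y t) \<ge> 0" using ph t y_nonneg[OF t0]
    by (intro volterra_nonneg) (auto simp: positive_from_def)
  show "volterra vs (v t) \<ge> 0" using ph t v_nonneg_pos_time[OF t0]
    by (intro volterra_nonneg) (auto simp: positive_from_def)
  show "volterra zs (z t) \<ge> 0" using ph t z_nonneg[OF t0]
    by (intro volterra_nonneg) (auto simp: positive_from_def)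
  have cF: "continuous_on {t - tau..t} (\<lambda>\<theta>. volterra (xs * vs) (x \<theta> * v \<theta>))"
    by (rule continuous_on_volterra_xv[OF ph]) (use t in auto)
  show "integral {t - tau..t} (\<lambda>\<theta>. volterra (xs * vs) (x \<theta> * v \<theta>)) \<ge> 0"
  proof (rule integral_nonneg[OF integrable_continuous_real[OF cF]])
    fix \<theta> assume \<theta>: "\<theta> \<in> {t - tau..t}"
    then have "x \<theta> \<ge> 0" "v \<theta> \<ge> 0" using x_nonneg v_nonneg t0 by auto
    moreover have "xs * vs > 0 \<Longrightarrow> x \<theta> * v \<theta> > 0" using ph t \<theta> by (auto simp: positive_from_def)
    ultimately show "volterra (xs * vs) (x \<theta> * v \<theta>) \<ge> 0"
      using ph by (intro volterra_nonneg) (auto simp: positive_from_def)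
  qed
qed

lemma lyap_term_le:
  assumes ph: "positive_from T xs ys vs zs" and t: "t \<ge> T" and a: "a \<ge> 0"
  shows "exp (- dl * tau) * volterra xs (x t) \<le> lyap xs ys vs zs a t"
    "volterra ys (y t) \<le> lyap xs ys vs zs a t"
    "a * volterra vs (v t) \<le> lyap xs ys vs zs a t"
    "p / q * volterra zs (z t) \<le> lyap xs ys vs zs a t"
    "0 \<le> lyap xs ys vs zs a t"
proof -
  note nn = lyap_terms_nonneg[OF ph t]
  have "exp (- dl * tau) * volterra xs (x t) \<ge> 0" "a * volterra vs (v t) \<ge> 0"
    "p / q * volterra zs (z t) \<ge> 0"
    "c * integral {t - tau..t} (\<lambda>\<theta>. volterra (xs * vs) (x \<theta> * v \<theta>)) \<ge> 0"
    using nn a pos c_pos by simp_all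
  with nn(2) show "exp (- dl * tau) * volterra xs (x t) \<le> lyap xs ys vs zs a t"
    "volterra ys (y t) \<le> lyap xs ys vs zs a t" "a * volterra vs (v t) \<le> lyap xs ys vs zs a t"
    "p / q * volterra zs (z t) \<le> lyap xs ys vs zs a t" "0 \<le> lyap xs ys vs zs a t"
    unfolding lyap_def by linarith+
qed

end

text \<open>At an equilibrium with \<open>x\<^sup>*, y\<^sup>*, v\<^sup>* > 0\<close> the derivative of the functional splits into the
  \<open>x\<close>-dissipation, three Volterra terms of ratios whose product is \<open>1\<close> (this is where the
  choice of the delay integral and of the weight \<open>a = c x\<^sup>* / \<mu>\<close> enters), and a term linear in \<open>z\<close>.\<close>

lemma lyap_deriv_expansion:
  fixes s d k E dl p N mu q b xs ys vs zs a X Y Vv Z Xt Vt :: real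
  assumes pos: "d > 0" "E > 0" "dl > 0" "p > 0" "N > 0" "mu > 0" "q > 0"
    and eq: "xs > 0" "ys > 0" "vs > 0"
    and r1: "s = d * xs + k * xs * vs"
    and r2: "k * E * xs * vs = dl * ys + p * ys * zs"
    and r3: "N * dl * ys = mu * vs"
    and ra: "a = k * E * xs / mu"
    and vals: "X > 0" "Y > 0" "Vv > 0" "Xt > 0" "Vt > 0" "Z \<noteq> 0 \<or> zs = 0"
  shows "E * ((1 - xs / X) * (s - d * X - k * X * Vv))
     + (1 - ys / Y) * (k * E * Xt * Vt - dl * Y - p * Y * Z)
     + a * ((1 - vs / Vv) * (N * dl * Y - mu * Vv))
     + p / q * ((1 - zs / Z) * (q * Y * Z - b * Z))
     + k * E * (volterra (xs * vs) (X * Vv) - volterra (xs * vs) (Xt * Vt))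
   = - (E * d * (X - xs)\<^sup>2 / X)
     - k * E * xs * vs * (volterra 1 (xs / X) + volterra 1 (Xt * Vt * ys / (xs * vs * Y))
                          + volterra 1 (Y * vs / (ys * Vv)))
     + p * (Z - zs) * (ys - b / q)"
proof -
  define c where "c = k * E"
  define A1 where "A1 = xs / X"
  define A2 where "A2 = Xt * Vt * ys / (xs * vs * Y)"
  define A3 where "A3 = Y * vs / (ys * Vv)"
  have A_pos: "A1 > 0" "A2 > 0" "A3 > 0" using eq vals by (auto simp: A1_def A2_def A3_def)
  have x_term: "E * ((1 - xs / X) * (s - d * X - k * X * Vv)) =
      - (E * d * (X - xs)\<^sup>2 / X) + c * xs * vs - c * X * Vv - c * xs * vs * A1 + c * xs * Vv"
    unfolding r1 c_def A1_def using vals eq by (simp add: field_simps power2_eq_square)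
  have y_term: "(1 - ys / Y) * (c * Xt * Vt - dl * Y - p * Y * Z) =
      c * Xt * Vt - dl * Y - p * Y * Z - c * xs * vs * A2 + dl * ys + p * ys * Z"
    unfolding A2_def using vals eq by (simp add: field_simps)
  have aN: "a * N * dl = c * xs * vs / ys" unfolding ra c_def using r3 eq pos
    by (simp add: field_simps)
  have amu: "a * mu = c * xs" unfolding ra c_def using pos by simp
  have "a * ((1 - vs / Vv) * (N * dl * Y - mu * Vv))
      = (a * N * dl) * Y - (a * mu) * Vv - (a * N * dl) * Y * vs / Vv + (a * mu) * vs"
    using vals by (simp add: field_simps)
  also have "\<dots> = (c * xs * vs / ys) * Y - c * xs * Vv - c * xs * vs * A3 + c * xs * vs"
    unfolding aN amu A3_def using vals eq by (simp add: field_simps)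
  finally have v_term: "a * ((1 - vs / Vv) * (N * dl * Y - mu * Vv)) =
      (c * xs * vs / ys) * Y - c * xs * Vv - c * xs * vs * A3 + c * xs * vs" .
  have z_term: "p / q * ((1 - zs / Z) * (q * Y * Z - b * Z)) =
      p * Z * Y - p * zs * Y - p * b / q * Z + p * b / q * zs"
    using pos vals(6) by (cases "Z = 0") (auto simp: field_simps)
  have "A1 * A2 * A3 = (Xt * Vt) / (X * Vv)"
    unfolding A1_def A2_def A3_def using eq vals by (simp add: field_simps)
  then have "ln (A1 * A2 * A3) = ln (Xt * Vt) - ln (X * Vv)" using vals by (simp add: ln_div)
  moreover have "ln (A1 * A2 * A3) = ln A1 + ln A2 + ln A3" using A_pos by (simp add: ln_mult)
  ultimately have ln_ratio: "ln (X * Vv) - ln (Xt * Vt) = - (ln A1 + ln A2 + ln A3)" by simp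
  have "volterra (xs * vs) (X * Vv) - volterra (xs * vs) (Xt * Vt)
      = X * Vv - Xt * Vt - xs * vs * (ln (X * Vv) - ln (Xt * Vt))"
    unfolding volterra_def by (simp add: algebra_simps)
  then have "volterra (xs * vs) (X * Vv) - volterra (xs * vs) (Xt * Vt)
      = X * Vv - Xt * Vt + xs * vs * (ln A1 + ln A2 + ln A3)"
    unfolding ln_ratio by (simp add: algebra_simps)
  then have delay_term: "c * (volterra (xs * vs) (X * Vv) - volterra (xs * vs) (Xt * Vt)) =
      c * X * Vv - c * Xt * Vt + c * xs * vs * (ln A1 + ln A2 + ln A3)"
    by (metis (no_types, lifting) distrib_left mult.assoc right_diff_distrib)
  have cyY: "(c * xs * vs / ys) * Y = dl * Y + p * zs * Y"
    using r2 eq unfolding c_def by (simp add: field_simps)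
  have dl_ys: "dl * ys = c * xs * vs - p * ys * zs" using r2 unfolding c_def by simp
  have z_expand: "p * (Z - zs) * (ys - b / q) = p * ys * Z - p * b / q * Z - p * ys * zs + p * b / q * zs"
    by (simp add: algebra_simps)
  have volterra_1: "volterra 1 (xs / X) = A1 - 1 - ln A1"
    "volterra 1 (Xt * Vt * ys / (xs * vs * Y)) = A2 - 1 - ln A2"
    "volterra 1 (Y * vs / (ys * Vv)) = A3 - 1 - ln A3"
    by (simp_all add: volterra_def A1_def A2_def A3_def)
  show ?thesis
    unfolding c_def[symmetric] x_term y_term v_term z_term delay_term cyY z_expand volterra_1
    using dl_ys by (simp add: algebra_simps)
qed

lemma lyap_deriv_bound_endemic:
  fixes s d k E dl p N mu q b xs ys vs zs a X Y Vv Z Xt Vt :: real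
  assumes pos: "d > 0" "k > 0" "E > 0" "dl > 0" "p > 0" "N > 0" "mu > 0" "q > 0"
    and eq: "xs > 0" "ys > 0" "vs > 0" "zs \<ge> 0"
    and r1: "s = d * xs + k * xs * vs"
    and r2: "k * E * xs * vs = dl * ys + p * ys * zs"
    and r3: "N * dl * ys = mu * vs"
    and ra: "a = k * E * xs / mu"
    and rz: "(zs = 0 \<and> q * ys \<le> b) \<or> q * ys = b"
    and vals: "X > 0" "Y > 0" "Vv > 0" "Xt > 0" "Vt > 0" "Z \<ge> 0" "zs > 0 \<Longrightarrow> Z > 0"
  shows "E * ((1 - xs / X) * (s - d * X - k * X * Vv))
     + (1 - ys / Y) * (k * E * Xt * Vt - dl * Y - p * Y * Z)
     + a * ((1 - vs / Vv) * (N * dl * Y - mu * Vv))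
     + p / q * ((1 - zs / Z) * (q * Y * Z - b * Z))
     + k * E * (volterra (xs * vs) (X * Vv) - volterra (xs * vs) (Xt * Vt)) \<le> - (E * d * (X - xs)\<^sup>2 / X)"
proof -
  have "Z \<noteq> 0 \<or> zs = 0" using vals(7) eq(4) by force
  note expansion = lyap_deriv_expansion[OF pos(1,3-8) eq(1-3) r1 r2 r3 ra vals(1-5) this]
  have "volterra 1 (xs / X) \<ge> 0" "volterra 1 (Xt * Vt * ys / (xs * vs * Y)) \<ge> 0"
    "volterra 1 (Y * vs / (ys * Vv)) \<ge> 0"
    using eq vals by (simp_all add: volterra_nonneg)
  then have "k * E * xs * vs * (volterra 1 (xs / X) + volterra 1 (Xt * Vt * ys / (xs * vs * Y))
      + volterra 1 (Y * vs / (ys * Vv))) \<ge> 0"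
    using pos eq by simp
  moreover have "p * (Z - zs) * (ys - b / q) \<le> 0"
  proof (cases "q * ys = b")
    case False
    then have "zs = 0" "ys - b / q \<le> 0" using rz pos by (auto simp: field_simps)
    then show ?thesis using pos vals by (simp add: mult_nonneg_nonpos)
  qed (use pos in \<open>simp add: field_simps\<close>)
  ultimately show ?thesis using expansion[where b = b] by linarith
qed

lemma lyap_deriv_bound_infection_free:
  fixes s d k E dl p N mu q b xs a X Y Vv Z Xt Vt :: real
  assumes pos: "d > 0" "N > 0" "q > 0"
    and r1: "s = d * xs" and R: "k * E * xs \<le> mu / N" and ra: "a = 1 / N"
    and vals: "X > 0" "Vv \<ge> 0"
  shows "E * ((1 - xs / X) * (s - d * X - k * X * Vv))
     + (1 - 0 / Y) * (k * E * Xt * Vt - dl * Y - p * Y * Z)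
     + a * ((1 - 0 / Vv) * (N * dl * Y - mu * Vv))
     + p / q * ((1 - 0 / Z) * (q * Y * Z - b * Z))
     + k * E * (volterra (xs * 0) (X * Vv) - volterra (xs * 0) (Xt * Vt))
   \<le> - (E * d * (X - xs)\<^sup>2 / X) - p * b / q * Z"
proof -
  have x_term: "E * ((1 - xs / X) * (s - d * X - k * X * Vv)) =
      - (E * d * (X - xs)\<^sup>2 / X) - k * E * X * Vv + k * E * xs * Vv"
    unfolding r1 using vals by (simp add: field_simps power2_eq_square)
  have v_term: "a * ((1 - 0 / Vv) * (N * dl * Y - mu * Vv)) = dl * Y - mu / N * Vv"
    unfolding ra using pos by (simp add: field_simps)
  have z_term: "p / q * ((1 - 0 / Z) * (q * Y * Z - b * Z)) = p * Y * Z - p * b / q * Z"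
    using pos by (simp add: field_simps)
  have "(k * E * xs - mu / N) * Vv \<le> 0" using R vals by (simp add: mult_nonpos_nonneg)
  then show ?thesis unfolding x_term v_term z_term by (simp add: algebra_simps)
qed

context virus_solution
begin

lemma lyap_deriv_le_infection_free:
  assumes xs: "xs = s / d" and R: "c * xs \<le> mu / N" and t: "t \<ge> 0" and xt: "x t > 0"
  shows "lyap_deriv xs 0 0 0 (1 / N) t
           \<le> - (exp (- dl * tau) * d * (x t - xs)\<^sup>2 / x t) - p * b / q * z t"
  unfolding lyap_deriv_def
  by (rule lyap_deriv_bound_infection_free) (use xs pos R xt v_nonneg t in auto)

lemma lyap_deriv_le_endemic:
  assumes eq: "xs > 0" "ys > 0" "vs > 0" "zs \<ge> 0"
    and r1: "s = d * xs + k * xs * vs" and r2: "c * xs * vs = dl * ys + p * ys * zs"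
    and r3: "N * dl * ys = mu * vs" and ra: "a = c * xs / mu"
    and rz: "(zs = 0 \<and> q * ys \<le> b) \<or> q * ys = b"
    and t: "t \<ge> 0" and vals: "x t > 0" "y t > 0" "v t > 0" "x (t - tau) > 0" "v (t - tau) > 0"
      "zs > 0 \<Longrightarrow> z t > 0"
  shows "lyap_deriv xs ys vs zs a t \<le> - (exp (- dl * tau) * d * (x t - xs)\<^sup>2 / x t)"
  unfolding lyap_deriv_def
  using lyap_deriv_bound_endemic[OF pos(2,3) exp_gt_zero pos(4-8) eq r1 r2 r3 ra rz vals(1-5)
      z_nonneg[OF t] vals(6)]
  by simp

lemma dissipative_if_endemic:
  assumes ph: "positive_from T xs ys vs zs" and eq: "ys > 0" "vs > 0"
    and r1: "s = d * xs + k * xs * vs" and r2: "c * xs * vs = dl * ys + p * ys * zs"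
    and r3: "N * dl * ys = mu * vs" and ra: "a = c * xs / mu"
    and rz: "(zs = 0 \<and> q * ys \<le> b) \<or> q * ys = b" and t: "t \<ge> T"
  shows "lyap_deriv xs ys vs zs a t \<le> - (exp (- dl * tau) * d * (x t - xs)\<^sup>2 / x t) - 0 * z t"
proof -
  have T0: "T \<ge> 0" and xs: "xs > 0" "zs \<ge> 0" using ph by (auto simp: positive_from_def)
  have xt: "x t > 0" using ph t by (simp add: positive_from_def)
  have yt: "y t > 0" using ph t eq(1) by (simp add: positive_from_def)
  have vt: "v t > 0" using ph t eq(2) by (simp add: positive_from_def)
  have zt: "zs > 0 \<Longrightarrow> z t > 0" using ph t by (simp add: positive_from_def)
  have "x (t - tau) * v (t - tau) > 0" using ph t xs(1) eq(2) by (simp add: positive_from_def)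
  moreover have "x (t - tau) \<ge> 0" "v (t - tau) \<ge> 0" using x_nonneg v_nonneg T0 t by auto
  ultimately have "x (t - tau) > 0" "v (t - tau) > 0" by (auto simp: zero_less_mult_iff)
  from lyap_deriv_le_endemic[OF xs(1) eq xs(2) r1 r2 r3 ra rz _ xt yt vt this zt]
  show ?thesis using T0 t by simp
qed

end

section \<open>Attractivity\<close>

lemma tendsto_shift_at_top:
  fixes f :: "real \<Rightarrow> real"
  assumes "(f \<longlongrightarrow> L) at_top"
  shows "((\<lambda>t. f (t - c)) \<longlongrightarrow> L) at_top"
  using filterlim_compose[OF assms filterlim_tendsto_add_at_top[OF tendsto_const filterlim_ident, of "- c"]]
  by (simp add: o_def)

lemma tendsto_zero_if_square_le:
  fixes f g :: "real \<Rightarrow> real"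
  assumes "(g \<longlongrightarrow> 0) at_top" "\<And>t. t \<ge> T \<Longrightarrow> (f t)\<^sup>2 \<le> g t"
  shows "(f \<longlongrightarrow> 0) at_top"
proof -
  have "((\<lambda>t. (f t)\<^sup>2) \<longlongrightarrow> 0) at_top"
  proof (rule tendsto_sandwich[OF _ _ tendsto_const assms(1)])
    show "\<forall>\<^sub>F t in at_top. (f t)\<^sup>2 \<le> g t"
      using eventually_ge_at_top[of T] by (rule eventually_mono) (rule assms(2))
  qed simp
  then have "((\<lambda>t. sqrt ((f t)\<^sup>2)) \<longlongrightarrow> sqrt 0) at_top" by (rule tendsto_real_sqrt)
  then show ?thesis by (simp add: tendsto_rabs_zero_iff)
qed

lemma bounded_if_volterra_le:
  assumes "us \<ge> 0" "\<And>t. t \<in> S \<Longrightarrow> u t \<ge> 0" "\<And>t. t \<in> S \<Longrightarrow> us > 0 \<Longrightarrow> u t > 0"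
    "\<And>t. t \<in> S \<Longrightarrow> volterra us (u t) \<le> K"
  shows "bounded (u ` S)"
  unfolding bounded_real
  using assms volterra_le_imp_le[OF assms(1)] by (intro exI[of _ "us * (1 + sqrt (K / us))\<^sup>2 + K"]) force

context virus_solution
begin

lemma bounded_if_lyap_decreasing:
  assumes ph: "positive_from T xs ys vs zs" and a: "a > 0"
    and decr: "\<And>t. t \<ge> T \<Longrightarrow> lyap_deriv xs ys vs zs a t \<le> 0"
  shows "bounded (x ` {T..})" "bounded (y ` {T..})" "bounded (v ` {T..})" "bounded (z ` {T..})"
proof -
  define V0 where "V0 = lyap xs ys vs zs a T"
  have T0: "T \<ge> 0" and eqs: "xs > 0" "ys \<ge> 0" "vs \<ge> 0" "zs \<ge> 0"
    using ph by (auto simp: positive_from_def)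
  have le: "exp (- dl * tau) * volterra xs (x t) \<le> V0" "volterra ys (y t) \<le> V0"
    "a * volterra vs (v t) \<le> V0" "p / q * volterra zs (z t) \<le> V0" if "t \<ge> T" for t
    using lyap_term_le[OF ph that less_imp_le[OF a]] lyap_antimono[OF ph decr that]
    unfolding V0_def by linarith+
  show "bounded (x ` {T..})"
    by (rule bounded_if_volterra_le[of xs _ _ "V0 / exp (- dl * tau)"])
       (use eqs ph le(1) in \<open>auto simp: positive_from_def field_simps less_imp_le\<close>)
  show "bounded (y ` {T..})"
    by (rule bounded_if_volterra_le[of ys _ _ V0])
       (use eqs ph le(2) y_nonneg T0 in \<open>auto simp: positive_from_def\<close>)
  show "bounded (v ` {T..})"
    by (rule bounded_if_volterra_le[of vs _ _ "V0 / a"])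
       (use eqs ph le(3) a v_nonneg_pos_time T0 in \<open>auto simp: positive_from_def field_simps\<close>)
  show "bounded (z ` {T..})"
    by (rule bounded_if_volterra_le[of zs _ _ "V0 * q / p"])
       (use eqs ph le(4) pos z_nonneg T0 in \<open>auto simp: positive_from_def field_simps\<close>)
qed

definition lipschitz_bounded_from :: "real \<Rightarrow> bool" where
  "lipschitz_bounded_from T \<longleftrightarrow> T \<ge> 0 \<and>
     lipschitz_from T x \<and> lipschitz_from T y \<and> lipschitz_from T v \<and> lipschitz_from T z \<and>
     bounded (x ` {T..}) \<and> bounded (y ` {T..}) \<and> bounded (v ` {T..}) \<and> bounded (z ` {T..})"

lemma lipschitz_bounded_from_if_bounded:
  assumes T0: "T \<ge> 0"
    and bnd: "bounded (x ` {T..})" "bounded (y ` {T..})" "bounded (v ` {T..})" "bounded (z ` {T..})"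
  shows "lipschitz_bounded_from (T + tau)"
proof -
  let ?T = "T + tau"
  have S: "{?T..} \<subseteq> {0..}" using T0 pos by auto
  have bnd': "bounded (x ` {?T..})" "bounded (y ` {?T..})" "bounded (v ` {?T..})" "bounded (z ` {?T..})"
    using bnd bounded_comp_Ici_mono pos by auto
  have bnd_delayed: "bounded ((\<lambda>t. x (t - tau)) ` {?T..})" "bounded ((\<lambda>t. v (t - tau)) ` {?T..})"
    by (intro bounded_shift_comp bnd)+
  have "lipschitz_from ?T x"
    by (rule lipschitz_from_DERIV[OF x_deriv[OF _ S]])
       (auto intro!: bounded_minus_comp bounded_mult_comp_real bnd')
  moreover have "lipschitz_from ?T y"
    by (rule lipschitz_from_DERIV[OF y_deriv[OF _ S]])
       (auto intro!: bounded_minus_comp bounded_mult_comp_real bnd' bnd_delayed)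
  moreover have "lipschitz_from ?T v"
    by (rule lipschitz_from_DERIV[OF v_deriv[OF _ S]])
       (auto intro!: bounded_minus_comp bounded_mult_comp_real bnd')
  moreover have "lipschitz_from ?T z"
    by (rule lipschitz_from_DERIV[OF z_deriv[OF _ S]])
       (auto intro!: bounded_minus_comp bounded_mult_comp_real bnd')
  ultimately show ?thesis using bnd' T0 pos by (simp add: lipschitz_bounded_from_def)
qed

text \<open>Barbalat's lemma applied to the dissipation \<open>c\<^sub>1 (x - x\<^sup>*)\<^sup>2 + \<beta> z\<close> of the functional;
  on \<open>[T', \<infinity>)\<close> the factor \<open>1 / x\<close> is bounded below by \<open>1 / M\<close>.\<close>

lemma x_tendsto_if_lyap_dissipative:
  assumes ph: "positive_from T xs ys vs zs" and a: "a > 0" and \<beta>: "\<beta> \<ge> 0"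
    and diss: "\<And>t. t \<ge> T \<Longrightarrow>
      lyap_deriv xs ys vs zs a t \<le> - (exp (- dl * tau) * d * (x t - xs)\<^sup>2 / x t) - \<beta> * z t"
    and lb: "lipschitz_bounded_from T'" and T': "T \<le> T'"
  shows "(x \<longlongrightarrow> xs) at_top" "\<beta> > 0 \<Longrightarrow> (z \<longlongrightarrow> 0) at_top"
proof -
  define E where "E = exp (- dl * tau)"
  have E: "E > 0" by (simp add: E_def)
  have T0: "T \<ge> 0" and x_pos': "\<And>t. t \<ge> T \<Longrightarrow> x t > 0"
    using ph by (auto simp: positive_from_def)
  have z_nonneg': "\<And>t. t \<ge> T' \<Longrightarrow> z t \<ge> 0" using z_nonneg T0 T' by simp
  obtain M where M: "M > 0" "\<And>t. t \<ge> T' \<Longrightarrow> x t \<le> M"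
    using lb unfolding lipschitz_bounded_from_def bounded_pos by force
  define f where "f t = E * d / M * ((x t - xs) * (x t - xs)) + \<beta> * z t" for t
  have f_nonneg: "f t \<ge> 0" if "t \<ge> T'" for t
    unfolding f_def using E pos M \<beta> z_nonneg'[OF that] by simp
  have dissipation: "lyap_deriv xs ys vs zs a t \<le> - f t" if "t \<ge> T'" for t
  proof -
    have "(x t - xs)\<^sup>2 / M \<le> (x t - xs)\<^sup>2 / x t"
      using M(2)[OF that] x_pos'[of t] that T' by (intro divide_left_mono) auto
    then have "E * d * ((x t - xs)\<^sup>2 / M) \<le> E * d * ((x t - xs)\<^sup>2 / x t)"
      using E pos by (intro mult_left_mono) auto
    then show ?thesis using diss[of t] that T' unfolding f_def E_def by (simp add: power2_eq_square)
  qed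
  have deriv: "(lyap xs ys vs zs a has_real_derivative lyap_deriv xs ys vs zs a t) (at t within {T'..})"
    if "t \<ge> T'" for t
    using that T' by (intro has_field_derivative_subset[OF has_real_derivative_lyap[OF ph]]) auto
  have f_lim: "(f \<longlongrightarrow> 0) at_top"
  proof (rule barbalat_lyapunov[OF deriv dissipation f_nonneg])
    show "0 \<le> lyap xs ys vs zs a t" if "t \<ge> T'" for t
      using lyap_term_le(5)[OF ph _ less_imp_le[OF a]] that T' by simp
    have "lipschitz_from T' f"
      using lb unfolding f_def lipschitz_bounded_from_def
      by (intro lipschitz_from_add lipschitz_from_cmult lipschitz_from_mult lipschitz_from_diff
            bounded_minus_comp lipschitz_from_const bounded_const_comp) auto
    then show "uniformly_continuous_on {T'..} f" by (rule uniformly_continuous_on_lipschitz_from)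
  qed
  have "((\<lambda>t. x t - xs) \<longlongrightarrow> 0) at_top"
  proof (rule tendsto_zero_if_square_le)
    show "((\<lambda>t. M / (E * d) * f t) \<longlongrightarrow> 0) at_top"
      using tendsto_mult_right_zero[OF f_lim, of "M / (E * d)"] by simp
    fix t assume "t \<ge> T'"
    then have "E * d / M * (x t - xs)\<^sup>2 \<le> f t"
      unfolding f_def using \<beta> z_nonneg' by (simp add: power2_eq_square)
    then show "(x t - xs)\<^sup>2 \<le> M / (E * d) * f t" using E pos M by (simp add: field_simps)
  qed
  then show "(x \<longlongrightarrow> xs) at_top" by (rule LIM_zero_cancel)
  assume "\<beta> > 0"
  show "(z \<longlongrightarrow> 0) at_top"
  proof (rule tendsto_sandwich[OF _ _ tendsto_const tendsto_divide_zero[OF f_lim, of \<beta>]])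
    show "\<forall>\<^sub>F t in at_top. 0 \<le> z t"
      using eventually_ge_at_top[of T'] by (rule eventually_mono) (rule z_nonneg')
    have "z t \<le> f t / \<beta>" for t
    proof -
      have "\<beta> * z t \<le> f t" unfolding f_def using E pos M by simp
      then show ?thesis using \<open>\<beta> > 0\<close> by (simp add: field_simps)
    qed
    then show "\<forall>\<^sub>F t in at_top. z t \<le> f t / \<beta>" by simp
  qed
qed

text \<open>Once one component converges, Barbalat's lemma makes its derivative vanish, and the
  corresponding equation identifies the limit of the next component.\<close>

lemma v_tendsto_if_x_tendsto:
  assumes lb: "lipschitz_bounded_from T" and x_lim: "(x \<longlongrightarrow> xs) at_top" and xs: "xs > 0"
    and r1: "s = d * xs + k * xs * vs"
  shows "(v \<longlongrightarrow> vs) at_top"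
proof -
  have T0: "T \<ge> 0" using lb by (simp add: lipschitz_bounded_from_def)
  have "lipschitz_from T (\<lambda>t. s - d * x t - k * x t * v t)"
    using lb unfolding lipschitz_bounded_from_def
    by (intro lipschitz_from_diff lipschitz_from_mult lipschitz_from_cmult lipschitz_from_const
          bounded_mult_comp_real bounded_const_comp) auto
  then have "((\<lambda>t. s - d * x t - k * x t * v t) \<longlongrightarrow> 0) at_top"
    using T0 by (intro barbalat[OF x_lim x_deriv uniformly_continuous_on_lipschitz_from]) auto
  then have "((\<lambda>t. (s - d * x t - (s - d * x t - k * x t * v t)) / (k * x t))
               \<longlongrightarrow> (s - d * xs - 0) / (k * xs)) at_top"
    using xs pos by (intro tendsto_intros x_lim) auto
  moreover have "(s - d * xs - 0) / (k * xs) = vs" using r1 xs pos by (simp add: field_simps)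
  moreover have "\<forall>\<^sub>F t in at_top. (s - d * x t - (s - d * x t - k * x t * v t)) / (k * x t) = v t"
    using order_tendstoD(1)[OF x_lim xs] by (rule eventually_mono) (use pos in simp)
  ultimately show ?thesis using Lim_transform_eventually by fastforce
qed

lemma y_tendsto_if_v_tendsto:
  assumes lb: "lipschitz_bounded_from T" and v_lim: "(v \<longlongrightarrow> vs) at_top"
    and r3: "N * dl * ys = mu * vs"
  shows "(y \<longlongrightarrow> ys) at_top"
proof -
  have T0: "T \<ge> 0" using lb by (simp add: lipschitz_bounded_from_def)
  have "lipschitz_from T (\<lambda>t. N * dl * y t - mu * v t)"
    using lb unfolding lipschitz_bounded_from_def by (intro lipschitz_from_diff lipschitz_from_cmult) auto
  then have "((\<lambda>t. N * dl * y t - mu * v t) \<longlongrightarrow> 0) at_top"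
    using T0 by (intro barbalat[OF v_lim v_deriv uniformly_continuous_on_lipschitz_from]) auto
  then have "((\<lambda>t. ((N * dl * y t - mu * v t) + mu * v t) / (N * dl)) \<longlongrightarrow> (0 + mu * vs) / (N * dl)) at_top"
    using pos by (intro tendsto_intros v_lim) auto
  moreover have "(0 + mu * vs) / (N * dl) = ys" using r3 pos by (simp add: field_simps)
  ultimately show ?thesis using pos by simp
qed

lemma z_tendsto_if_y_tendsto:
  assumes lb: "lipschitz_bounded_from T" and x_lim: "(x \<longlongrightarrow> xs) at_top"
    and v_lim: "(v \<longlongrightarrow> vs) at_top" and y_lim: "(y \<longlongrightarrow> ys) at_top" and ys: "ys > 0"
    and r2: "c * xs * vs = dl * ys + p * ys * zs"
  shows "(z \<longlongrightarrow> zs) at_top"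
proof -
  let ?T = "T + tau"
  let ?y' = "\<lambda>t. c * x (t - tau) * v (t - tau) - dl * y t - p * y t * z t"
  have T0: "T \<ge> 0" and lb': "lipschitz_from T x" "lipschitz_from T y" "lipschitz_from T v"
    "lipschitz_from T z" "bounded (x ` {T..})" "bounded (y ` {T..})" "bounded (v ` {T..})"
    "bounded (z ` {T..})"
    using lb by (auto simp: lipschitz_bounded_from_def)
  have "T \<le> ?T" using pos by simp
  then have ly: "lipschitz_from ?T y" and lz: "lipschitz_from ?T z"
    and bdy: "bounded (y ` {?T..})" and bdz: "bounded (z ` {?T..})"
    using lb' lipschitz_from_mono bounded_comp_Ici_mono by blast+
  have lx: "lipschitz_from ?T (\<lambda>t. x (t - tau))" and lv: "lipschitz_from ?T (\<lambda>t. v (t - tau))"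
    and bdx: "bounded ((\<lambda>t. x (t - tau)) ` {?T..})" and bdv: "bounded ((\<lambda>t. v (t - tau)) ` {?T..})"
    using lb' by (auto intro: lipschitz_from_shift bounded_shift_comp)
  have "lipschitz_from ?T ?y'"
    by (intro lipschitz_from_diff lipschitz_from_mult lipschitz_from_cmult
          bounded_mult_comp_real bounded_const_comp lx lv ly lz bdx bdv bdy bdz)
  then have "(?y' \<longlongrightarrow> 0) at_top"
    using T0 pos by (intro barbalat[OF y_lim y_deriv uniformly_continuous_on_lipschitz_from]) auto
  then have "((\<lambda>t. (c * x (t - tau) * v (t - tau) - dl * y t - ?y' t) / (p * y t))
               \<longlongrightarrow> (c * xs * vs - dl * ys - 0) / (p * ys)) at_top"
    using ys pos by (intro tendsto_intros tendsto_shift_at_top x_lim v_lim y_lim) auto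
  moreover have "(c * xs * vs - dl * ys - 0) / (p * ys) = zs" using r2 ys pos by (simp add: field_simps)
  moreover have "\<forall>\<^sub>F t in at_top. (c * x (t - tau) * v (t - tau) - dl * y t - ?y' t) / (p * y t) = z t"
    using order_tendstoD(1)[OF y_lim ys] by (rule eventually_mono) (use pos in simp)
  ultimately show ?thesis using Lim_transform_eventually by fastforce
qed

end

section \<open>Stability\<close>

lemma volterra_product_le_if_near:
  assumes eqs: "xs \<ge> 0" "vs \<ge> 0" and XV: "X \<ge> 0" "V \<ge> 0"
    and near: "\<bar>X - xs\<bar> < \<eta>" "\<bar>V - vs\<bar> < \<eta>" and \<eta>: "\<eta> \<le> 1" "\<eta> * (vs + 1 + xs) \<le> 1"
      "xs * vs > 0 \<Longrightarrow> \<eta> * (vs + 1 + xs) \<le> xs * vs / 2"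
  shows "volterra (xs * vs) (X * V) \<le> \<eta> * ((vs + 1 + xs) * (1 + 2 / (xs * vs)))"
proof -
  have "X * V - xs * vs = (X - xs) * V + xs * (V - vs)" by (simp add: algebra_simps)
  then have "\<bar>X * V - xs * vs\<bar> \<le> \<bar>X - xs\<bar> * \<bar>V\<bar> + xs * \<bar>V - vs\<bar>"
    using abs_triangle_ineq[of "(X - xs) * V" "xs * (V - vs)"] eqs by (simp add: abs_mult)
  also have "\<dots> \<le> \<eta> * (vs + 1) + xs * \<eta>"
  proof (rule add_mono)
    have "\<bar>V\<bar> \<le> vs + 1" using near(2) \<eta>(1) eqs by linarith
    then show "\<bar>X - xs\<bar> * \<bar>V\<bar> \<le> \<eta> * (vs + 1)" using near(1) by (intro mult_mono) auto
    show "xs * \<bar>V - vs\<bar> \<le> xs * \<eta>" using near(2) eqs by (intro mult_left_mono) auto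
  qed
  finally have "\<bar>X * V - xs * vs\<bar> \<le> \<eta> * (vs + 1 + xs)" by (simp add: algebra_simps)
  from volterra_le_if_near[OF _ _ this \<eta>(2,3)] eqs XV show ?thesis
    by (simp add: mult.assoc)
qed

context virus_solution
begin

definition initially_near :: "real \<Rightarrow> real \<Rightarrow> real \<Rightarrow> real \<Rightarrow> real \<Rightarrow> bool" where
  "initially_near \<eta> xs ys vs zs \<longleftrightarrow> (\<forall>\<theta>\<in>{-tau..0}. \<bar>x \<theta> - xs\<bar> < \<eta> \<and> \<bar>v \<theta> - vs\<bar> < \<eta>) \<and>
     \<bar>y 0 - ys\<bar> < \<eta> \<and> \<bar>z 0 - zs\<bar> < \<eta>"

lemma positive_from_zero_if_near:
  assumes eqs: "xs > 0" "ys \<ge> 0" "vs \<ge> 0" "zs \<ge> 0"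
    and \<eta>: "\<eta> \<le> xs / 2" "ys > 0 \<Longrightarrow> \<eta> \<le> ys / 2" "vs > 0 \<Longrightarrow> \<eta> \<le> vs / 2" "zs > 0 \<Longrightarrow> \<eta> \<le> zs / 2"
    and near: "initially_near \<eta> xs ys vs zs"
  shows "positive_from 0 xs ys vs zs"
proof -
  have near': "\<bar>x \<theta> - xs\<bar> < \<eta>" "\<bar>v \<theta> - vs\<bar> < \<eta>" if "\<theta> \<in> {-tau..0}" for \<theta>
    using near that by (auto simp: initially_near_def)
  have x_init: "x \<theta> > 0" if "\<theta> \<in> {-tau..0}" for \<theta>
    using near'(1)[OF that] \<eta>(1) eqs(1) by linarith
  have v_init: "v \<theta> > 0" if "vs > 0" "\<theta> \<in> {-tau..0}" for \<theta>
    using near'(2)[OF that(2)] \<eta>(3)[OF that(1)] that(1) by linarith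
  have x0: "x 0 > 0" using x_init pos by simp
  have x_pos': "x t > 0" if "t \<ge> 0" for t
    using x_pos[of t] x0 that by (cases "t = 0") auto
  have "ys = 0 \<or> (\<forall>t\<ge>0. y t > 0)"
  proof (cases "ys = 0")
    case False
    then have "y 0 > 0" using near \<eta>(2) eqs(2) by (auto simp: initially_near_def)
    then show ?thesis using y_pos_mono[of 0] by auto
  qed simp
  moreover have v_pos': "vs = 0 \<or> (\<forall>t\<ge>-tau. v t > 0)"
  proof (cases "vs = 0")
    case False
    then have vs: "vs > 0" using eqs(3) by simp
    have "v t > 0" if "t \<ge> -tau" for t
      using v_init[OF vs, of t] v_init[OF vs, of 0] v_pos_mono[of 0 t] that pos by (cases "t \<le> 0") auto
    then show ?thesis by simp
  qed simp
  moreover have "zs = 0 \<or> (\<forall>t\<ge>0. z t > 0)"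
  proof (cases "zs = 0")
    case False
    then have "z 0 > 0" using near \<eta>(4) eqs(4) by (auto simp: initially_near_def)
    then show ?thesis using z_pos by auto
  qed simp
  moreover have "xs * vs = 0 \<or> (\<forall>t\<ge>0 - tau. x t * v t > 0)"
  proof (cases "vs = 0")
    case False
    have "x t > 0" if "t \<ge> -tau" for t using x_init[of t] x_pos'[of t] that by (cases "t \<le> 0") auto
    with False v_pos' show ?thesis by simp
  qed simp
  ultimately show ?thesis using eqs x_pos' pos by (auto simp: positive_from_def)
qed

lemma lyap_zero_le_if_near:
  assumes ph: "positive_from 0 xs ys vs zs" and a: "a \<ge> 0"
    and \<eta>: "\<eta> \<le> 1" "\<eta> \<le> xs / 2" "ys > 0 \<Longrightarrow> \<eta> \<le> ys / 2" "vs > 0 \<Longrightarrow> \<eta> \<le> vs / 2"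
      "zs > 0 \<Longrightarrow> \<eta> \<le> zs / 2" "\<eta> * (vs + 1 + xs) \<le> 1" "xs * vs > 0 \<Longrightarrow> \<eta> * (vs + 1 + xs) \<le> xs * vs / 2"
    and near: "initially_near \<eta> xs ys vs zs"
  shows "lyap xs ys vs zs a 0 \<le> \<eta> * (exp (- dl * tau) * (1 + 2 / xs) + (1 + 2 / ys) + a * (1 + 2 / vs)
            + p / q * (1 + 2 / zs) + c * tau * ((vs + 1 + xs) * (1 + 2 / (xs * vs))))"
proof -
  have eqs: "xs > 0" "ys \<ge> 0" "vs \<ge> 0" "zs \<ge> 0" using ph by (auto simp: positive_from_def)
  have near': "\<bar>x \<theta> - xs\<bar> < \<eta>" "\<bar>v \<theta> - vs\<bar> < \<eta>" if "\<theta> \<in> {-tau..0}" for \<theta>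
    using near that by (auto simp: initially_near_def)
  have x0: "\<bar>x 0 - xs\<bar> < \<eta>" "\<bar>v 0 - vs\<bar> < \<eta>" using near' pos by auto
  have b1: "volterra xs (x 0) \<le> \<eta> * (1 + 2 / xs)"
    by (rule volterra_le_if_near) (use eqs x0 \<eta> x_init_nonneg[of 0] pos in auto)
  have b2: "volterra ys (y 0) \<le> \<eta> * (1 + 2 / ys)"
    by (rule volterra_le_if_near) (use eqs y0_nonneg near \<eta> in \<open>auto simp: initially_near_def\<close>)
  have b3: "volterra vs (v 0) \<le> \<eta> * (1 + 2 / vs)"
    by (rule volterra_le_if_near) (use eqs v_init_nonneg[of 0] x0 \<eta> pos in auto)
  have b4: "volterra zs (z 0) \<le> \<eta> * (1 + 2 / zs)"
    by (rule volterra_le_if_near) (use eqs z0_nonneg near \<eta> in \<open>auto simp: initially_near_def\<close>)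
  have cF: "continuous_on {-tau..0} (\<lambda>\<theta>. volterra (xs * vs) (x \<theta> * v \<theta>))"
    by (rule continuous_on_volterra_xv[OF ph]) auto
  have "volterra (xs * vs) (x \<theta> * v \<theta>) \<le> \<eta> * ((vs + 1 + xs) * (1 + 2 / (xs * vs)))"
    if "\<theta> \<in> {-tau..0}" for \<theta>
    by (rule volterra_product_le_if_near[OF _ _ _ _ near'[OF that] \<eta>(1,6,7)])
       (use eqs x_init_nonneg[OF that] v_init_nonneg[OF that] in auto)
  then have "integral {-tau..0} (\<lambda>\<theta>. volterra (xs * vs) (x \<theta> * v \<theta>))
      \<le> integral {-tau..0} (\<lambda>\<theta>. \<eta> * ((vs + 1 + xs) * (1 + 2 / (xs * vs))))"
    by (intro integral_le[OF integrable_continuous_real[OF cF]]) auto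
  also have "\<dots> = tau * (\<eta> * ((vs + 1 + xs) * (1 + 2 / (xs * vs))))" using pos by simp
  finally have b5: "c * integral {0 - tau..0} (\<lambda>\<theta>. volterra (xs * vs) (x \<theta> * v \<theta>))
      \<le> c * (tau * (\<eta> * ((vs + 1 + xs) * (1 + 2 / (xs * vs)))))"
    using c_pos by (simp add: mult_left_mono)
  have "lyap xs ys vs zs a 0 \<le> exp (- dl * tau) * (\<eta> * (1 + 2 / xs)) + \<eta> * (1 + 2 / ys)
      + a * (\<eta> * (1 + 2 / vs)) + p / q * (\<eta> * (1 + 2 / zs))
      + c * (tau * (\<eta> * ((vs + 1 + xs) * (1 + 2 / (xs * vs)))))"
    unfolding lyap_def by (intro add_mono mult_left_mono b1 b2 b3 b4 b5) (use a pos in auto)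
  then show ?thesis by (simp add: algebra_simps)
qed

end

context virus_solution
begin

lemma tendsto_equilibrium_if_dissipative:
  assumes ph: "positive_from T xs ys vs zs" and a: "a > 0" and \<beta>: "\<beta> \<ge> 0"
    and r1: "s = d * xs + k * xs * vs" and r3: "N * dl * ys = mu * vs"
    and r2: "c * xs * vs = dl * ys + p * ys * zs"
    and z_case: "ys > 0 \<or> (\<beta> > 0 \<and> zs = 0)"
    and diss: "\<And>t. t \<ge> T \<Longrightarrow>
      lyap_deriv xs ys vs zs a t \<le> - (exp (- dl * tau) * d * (x t - xs)\<^sup>2 / x t) - \<beta> * z t"
  shows "(x \<longlongrightarrow> xs) at_top \<and> (y \<longlongrightarrow> ys) at_top \<and> (v \<longlongrightarrow> vs) at_top \<and> (z \<longlongrightarrow> zs) at_top"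
proof -
  have T0: "T \<ge> 0" and xs: "xs > 0" using ph by (auto simp: positive_from_def)
  have "lyap_deriv xs ys vs zs a t \<le> 0" if "t \<ge> T" for t
  proof -
    have "exp (- dl * tau) * d * (x t - xs)\<^sup>2 / x t \<ge> 0" "\<beta> * z t \<ge> 0"
      using ph that z_nonneg[of t] T0 pos \<beta> by (auto simp: positive_from_def)
    then show ?thesis using diss[OF that] by linarith
  qed
  note bnd = bounded_if_lyap_decreasing[OF ph a this]
  have lb: "lipschitz_bounded_from (T + tau)" by (rule lipschitz_bounded_from_if_bounded[OF T0 bnd])
  have T: "T \<le> T + tau" using pos by simp
  note x_lim = x_tendsto_if_lyap_dissipative[OF ph a \<beta> diss lb T]
  have v_lim: "(v \<longlongrightarrow> vs) at_top" by (rule v_tendsto_if_x_tendsto[OF lb x_lim(1) xs r1])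
  have y_lim: "(y \<longlongrightarrow> ys) at_top" by (rule y_tendsto_if_v_tendsto[OF lb v_lim r3])
  have "(z \<longlongrightarrow> zs) at_top"
    using z_case x_lim(2) z_tendsto_if_y_tendsto[OF lb x_lim(1) v_lim y_lim _ r2] by auto
  with x_lim(1) v_lim y_lim show ?thesis by blast
qed

lemma near_if_lyap_small:
  assumes ph: "positive_from T xs ys vs zs" and t: "t \<ge> T" and a: "a > 0"
    and rx: "\<And>u. u \<ge> 0 \<Longrightarrow> (xs > 0 \<Longrightarrow> u > 0) \<Longrightarrow> volterra xs u \<le> rx \<Longrightarrow> \<bar>u - xs\<bar> < \<epsilon>"
    and ry: "\<And>u. u \<ge> 0 \<Longrightarrow> (ys > 0 \<Longrightarrow> u > 0) \<Longrightarrow> volterra ys u \<le> ry \<Longrightarrow> \<bar>u - ys\<bar> < \<epsilon>"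
    and rv: "\<And>u. u \<ge> 0 \<Longrightarrow> (vs > 0 \<Longrightarrow> u > 0) \<Longrightarrow> volterra vs u \<le> rv \<Longrightarrow> \<bar>u - vs\<bar> < \<epsilon>"
    and rz: "\<And>u. u \<ge> 0 \<Longrightarrow> (zs > 0 \<Longrightarrow> u > 0) \<Longrightarrow> volterra zs u \<le> rz \<Longrightarrow> \<bar>u - zs\<bar> < \<epsilon>"
    and small: "lyap xs ys vs zs a t \<le> min (min (exp (- dl * tau) * rx) ry) (min (a * rv) (p / q * rz))"
  shows "\<bar>x t - xs\<bar> < \<epsilon> \<and> \<bar>y t - ys\<bar> < \<epsilon> \<and> \<bar>v t - vs\<bar> < \<epsilon> \<and> \<bar>z t - zs\<bar> < \<epsilon>"
proof -
  have T0: "T \<ge> 0" using ph by (simp add: positive_from_def)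
  note term_le = lyap_term_le[OF ph t less_imp_le[OF a]]
  have pos_t: "x t > 0" "ys > 0 \<Longrightarrow> y t > 0" "vs > 0 \<Longrightarrow> v t > 0" "zs > 0 \<Longrightarrow> z t > 0"
    using ph t by (auto simp: positive_from_def)
  have "exp (- dl * tau) * volterra xs (x t) \<le> exp (- dl * tau) * rx" using term_le(1) small by linarith
  then have x_near: "\<bar>x t - xs\<bar> < \<epsilon>" using rx[of "x t"] pos_t by simp
  have y_near: "\<bar>y t - ys\<bar> < \<epsilon>" using ry[of "y t"] term_le(2) small y_nonneg pos_t t T0 by simp
  have "a * volterra vs (v t) \<le> a * rv" using term_le(3) small by linarith
  then have v_near: "\<bar>v t - vs\<bar> < \<epsilon>" using rv[of "v t"] a v_nonneg_pos_time[of t] pos_t t T0 by simp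
  have "p / q * volterra zs (z t) \<le> p / q * rz" using term_le(4) small by linarith
  moreover have "p / q > 0" using pos by simp
  ultimately have "volterra zs (z t) \<le> rz" by (simp only: mult_le_cancel_left_pos)
  then have "\<bar>z t - zs\<bar> < \<epsilon>" using rz[of "z t"] z_nonneg[of t] pos_t t T0 by simp
  with x_near y_near v_near show ?thesis by blast
qed

end

lemma small_radius_exists:
  fixes xs ys vs zs K R :: real
  assumes "xs > 0" "ys \<ge> 0" "vs \<ge> 0" "zs \<ge> 0" "K \<ge> 0" "R > 0"
  obtains \<eta> where "\<eta> > 0" "\<eta> \<le> 1" "\<eta> \<le> xs / 2" "ys > 0 \<Longrightarrow> \<eta> \<le> ys / 2" "vs > 0 \<Longrightarrow> \<eta> \<le> vs / 2"
    "zs > 0 \<Longrightarrow> \<eta> \<le> zs / 2" "\<eta> * (vs + 1 + xs) \<le> 1"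
    "xs * vs > 0 \<Longrightarrow> \<eta> * (vs + 1 + xs) \<le> xs * vs / 2" "\<eta> * K \<le> R"
proof -
  define C where "C = vs + 1 + xs"
  have C: "C > 0" using assms by (simp add: C_def)
  define half where "half u = (if u > 0 then u / 2 else 1)" for u :: real
  have half: "half u > 0" "u > 0 \<Longrightarrow> half u = u / 2" for u by (auto simp: half_def)
  define \<eta> where "\<eta> = min (min (min 1 (xs / 2)) (min (half ys) (half vs)))
    (min (min (half zs) (1 / C)) (min (half (xs * vs) / C) (R / (K + 1))))"
  have "half (xs * vs) / C > 0" "R / (K + 1) > 0" "1 / C > 0" using half C assms by auto
  then have \<eta>_pos: "\<eta> > 0" unfolding \<eta>_def using half assms by simp
  have \<eta>_le: "\<eta> \<le> 1" "\<eta> \<le> xs / 2" "\<eta> \<le> half ys" "\<eta> \<le> half vs" "\<eta> \<le> half zs" "\<eta> \<le> 1 / C"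
    "\<eta> \<le> half (xs * vs) / C" "\<eta> \<le> R / (K + 1)"
    unfolding \<eta>_def by linarith+
  show ?thesis
  proof (rule that[OF \<eta>_pos \<eta>_le(1,2)])
    show "ys > 0 \<Longrightarrow> \<eta> \<le> ys / 2" "vs > 0 \<Longrightarrow> \<eta> \<le> vs / 2" "zs > 0 \<Longrightarrow> \<eta> \<le> zs / 2"
      using \<eta>_le(3-5) half(2) by auto
    show "\<eta> * (vs + 1 + xs) \<le> 1" using \<eta>_le(6) C unfolding C_def[symmetric] by (simp add: field_simps)
    show "xs * vs > 0 \<Longrightarrow> \<eta> * (vs + 1 + xs) \<le> xs * vs / 2"
      using \<eta>_le(7) half(2) C unfolding C_def[symmetric] by (simp add: field_simps)
    have "\<eta> * K \<le> R / (K + 1) * K" using \<eta>_le(8) assms(5) by (intro mult_right_mono) auto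
    also have "\<dots> \<le> R" using assms(5,6) by (simp add: field_simps)
    finally show "\<eta> * K \<le> R" .
  qed
qed

lemma stable_if_lyap_decreasing:
  fixes s d k dl p N mu q b tau xs ys vs zs a :: real
  assumes pos: "s > 0" "d > 0" "k > 0" "dl > 0" "p > 0" "N > 0" "mu > 0" "q > 0" "b > 0" "tau > 0"
    and eqs: "xs > 0" "ys \<ge> 0" "vs \<ge> 0" "zs \<ge> 0" "a > 0"
    and decr: "\<And>x y v z t. is_solution s d k dl p N mu q b tau x y v z \<Longrightarrow> admissible tau x y v z \<Longrightarrow>
        virus_solution.positive_from tau x y v z 0 xs ys vs zs \<Longrightarrow> t \<ge> 0 \<Longrightarrow>
        virus_solution.lyap_deriv s d k dl p N mu q b tau x y v z xs ys vs zs a t \<le> 0"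
    and \<epsilon>: "\<epsilon> > 0"
  obtains \<eta> where "\<eta> > 0"
    "\<And>x y v z t. is_solution s d k dl p N mu q b tau x y v z \<Longrightarrow> admissible tau x y v z \<Longrightarrow>
        (\<forall>\<theta>\<in>{-tau..0}. \<bar>x \<theta> - xs\<bar> < \<eta> \<and> \<bar>v \<theta> - vs\<bar> < \<eta>) \<Longrightarrow>
        \<bar>y 0 - ys\<bar> < \<eta> \<Longrightarrow> \<bar>z 0 - zs\<bar> < \<eta> \<Longrightarrow> t \<ge> 0 \<Longrightarrow>
        \<bar>x t - xs\<bar> < \<epsilon> \<and> \<bar>y t - ys\<bar> < \<epsilon> \<and> \<bar>v t - vs\<bar> < \<epsilon> \<and> \<bar>z t - zs\<bar> < \<epsilon>"
proof -
  define E where "E = exp (- dl * tau)"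
  have E: "E > 0" by (simp add: E_def)
  obtain rx where rx: "rx > 0"
    "\<And>u. u \<ge> 0 \<Longrightarrow> (xs > 0 \<Longrightarrow> u > 0) \<Longrightarrow> volterra xs u \<le> rx \<Longrightarrow> \<bar>u - xs\<bar> < \<epsilon>"
    using volterra_small_imp_near[OF less_imp_le[OF eqs(1)] \<epsilon>] by blast
  obtain ry where ry: "ry > 0"
    "\<And>u. u \<ge> 0 \<Longrightarrow> (ys > 0 \<Longrightarrow> u > 0) \<Longrightarrow> volterra ys u \<le> ry \<Longrightarrow> \<bar>u - ys\<bar> < \<epsilon>"
    using volterra_small_imp_near[OF eqs(2) \<epsilon>] by blast
  obtain rv where rv: "rv > 0"
    "\<And>u. u \<ge> 0 \<Longrightarrow> (vs > 0 \<Longrightarrow> u > 0) \<Longrightarrow> volterra vs u \<le> rv \<Longrightarrow> \<bar>u - vs\<bar> < \<epsilon>"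
    using volterra_small_imp_near[OF eqs(3) \<epsilon>] by blast
  obtain rz where rz: "rz > 0"
    "\<And>u. u \<ge> 0 \<Longrightarrow> (zs > 0 \<Longrightarrow> u > 0) \<Longrightarrow> volterra zs u \<le> rz \<Longrightarrow> \<bar>u - zs\<bar> < \<epsilon>"
    using volterra_small_imp_near[OF eqs(4) \<epsilon>] by blast
  define R where "R = min (min (E * rx) ry) (min (a * rv) (p / q * rz))"
  have R: "R > 0" using E rx ry rv rz eqs pos by (simp add: R_def)
  define K where "K = E * (1 + 2 / xs) + (1 + 2 / ys) + a * (1 + 2 / vs) + p / q * (1 + 2 / zs)
    + k * exp (- dl * tau) * tau * ((vs + 1 + xs) * (1 + 2 / (xs * vs)))"
  have K: "K \<ge> 0" unfolding K_def using E eqs pos by (intro add_nonneg_nonneg mult_nonneg_nonneg) auto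
  obtain \<eta> where \<eta>: "\<eta> > 0" "\<eta> \<le> 1" "\<eta> \<le> xs / 2" "ys > 0 \<Longrightarrow> \<eta> \<le> ys / 2"
    "vs > 0 \<Longrightarrow> \<eta> \<le> vs / 2" "zs > 0 \<Longrightarrow> \<eta> \<le> zs / 2" "\<eta> * (vs + 1 + xs) \<le> 1"
    "xs * vs > 0 \<Longrightarrow> \<eta> * (vs + 1 + xs) \<le> xs * vs / 2" "\<eta> * K \<le> R"
    using small_radius_exists[OF eqs(1-4) K R] by blast
  show ?thesis
  proof (rule that[OF \<eta>(1)])
    fix x y v z :: "real \<Rightarrow> real" and t :: real
    assume sol: "is_solution s d k dl p N mu q b tau x y v z" and adm: "admissible tau x y v z"
      and near: "\<forall>\<theta>\<in>{-tau..0}. \<bar>x \<theta> - xs\<bar> < \<eta> \<and> \<bar>v \<theta> - vs\<bar> < \<eta>" "\<bar>y 0 - ys\<bar> < \<eta>" "\<bar>z 0 - zs\<bar> < \<eta>"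
      and t: "t \<ge> 0"
    interpret S: virus_solution s d k dl p N mu q b tau x y v z
      using pos sol adm by unfold_locales auto
    have near': "S.initially_near \<eta> xs ys vs zs" using near by (simp add: S.initially_near_def)
    have ph: "S.positive_from 0 xs ys vs zs"
      by (rule S.positive_from_zero_if_near[OF eqs(1-4) \<eta>(3-6) near'])
    have "S.lyap xs ys vs zs a t \<le> S.lyap xs ys vs zs a 0"
      by (rule S.lyap_antimono[OF ph decr[OF sol adm ph] t])
    also have "\<dots> \<le> \<eta> * K"
      unfolding K_def E_def
      by (rule S.lyap_zero_le_if_near[OF ph less_imp_le[OF eqs(5)] \<eta>(2-8) near'])
    finally have lyap_le: "S.lyap xs ys vs zs a t \<le> R" using \<eta>(9) by linarith
    show "\<bar>x t - xs\<bar> < \<epsilon> \<and> \<bar>y t - ys\<bar> < \<epsilon> \<and> \<bar>v t - vs\<bar> < \<epsilon> \<and> \<bar>z t - zs\<bar> < \<epsilon>"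
      by (rule S.near_if_lyap_small[OF ph t eqs(5) rx(2) ry(2) rv(2) rz(2)])
         (use lyap_le in \<open>simp_all add: R_def E_def\<close>)
  qed
qed

lemma GAS_if_lyap_dissipative:
  fixes s d k dl p N mu q b tau xs ys vs zs a \<beta> :: real
    and P :: "(real \<Rightarrow> real) \<Rightarrow> (real \<Rightarrow> real) \<Rightarrow> (real \<Rightarrow> real) \<Rightarrow> (real \<Rightarrow> real) \<Rightarrow> bool"
  assumes pos: "s > 0" "d > 0" "k > 0" "dl > 0" "p > 0" "N > 0" "mu > 0" "q > 0" "b > 0" "tau > 0"
    and eqs: "xs > 0" "ys \<ge> 0" "vs \<ge> 0" "zs \<ge> 0" "a > 0" "\<beta> \<ge> 0"
    and r1: "s = d * xs + k * xs * vs" and r3: "N * dl * ys = mu * vs"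
    and r2: "k * exp (- dl * tau) * xs * vs = dl * ys + p * ys * zs"
    and z_case: "ys > 0 \<or> (\<beta> > 0 \<and> zs = 0)"
    and P_adm: "\<And>x y v z. P x y v z \<Longrightarrow> admissible tau x y v z"
    and diss: "\<And>x y v z T t. is_solution s d k dl p N mu q b tau x y v z \<Longrightarrow> admissible tau x y v z \<Longrightarrow>
        virus_solution.positive_from tau x y v z T xs ys vs zs \<Longrightarrow> t \<ge> T \<Longrightarrow>
        virus_solution.lyap_deriv s d k dl p N mu q b tau x y v z xs ys vs zs a t
          \<le> - (exp (- dl * tau) * d * (x t - xs)\<^sup>2 / x t) - \<beta> * z t"
    and start: "\<And>x y v z. is_solution s d k dl p N mu q b tau x y v z \<Longrightarrow> P x y v z \<Longrightarrow>
        \<exists>T. virus_solution.positive_from tau x y v z T xs ys vs zs"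
  shows "GAS s d k dl p N mu q b tau P xs ys vs zs"
  unfolding GAS_def
proof (rule conjI; intro allI impI)
  have decr: "virus_solution.lyap_deriv s d k dl p N mu q b tau x y v z xs ys vs zs a t \<le> 0"
    if sol: "is_solution s d k dl p N mu q b tau x y v z" and adm: "admissible tau x y v z"
      and ph: "virus_solution.positive_from tau x y v z 0 xs ys vs zs" and t: "t \<ge> 0" for x y v z t
  proof -
    interpret S: virus_solution s d k dl p N mu q b tau x y v z
      using pos sol adm by unfold_locales auto
    have "exp (- dl * tau) * d * (x t - xs)\<^sup>2 / x t \<ge> 0" "\<beta> * z t \<ge> 0"
      using ph t S.z_nonneg[OF t] pos eqs(6) by (auto simp: S.positive_from_def)
    then show ?thesis using diss[OF sol adm ph t] by linarith
  qed
  fix \<epsilon> :: real assume "\<epsilon> > 0"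
  obtain \<eta> where "\<eta> > 0" and near: "\<And>x y v z t. is_solution s d k dl p N mu q b tau x y v z \<Longrightarrow>
      admissible tau x y v z \<Longrightarrow> (\<forall>\<theta>\<in>{-tau..0}. \<bar>x \<theta> - xs\<bar> < \<eta> \<and> \<bar>v \<theta> - vs\<bar> < \<eta>) \<Longrightarrow>
      \<bar>y 0 - ys\<bar> < \<eta> \<Longrightarrow> \<bar>z 0 - zs\<bar> < \<eta> \<Longrightarrow> t \<ge> 0 \<Longrightarrow>
      \<bar>x t - xs\<bar> < \<epsilon> \<and> \<bar>y t - ys\<bar> < \<epsilon> \<and> \<bar>v t - vs\<bar> < \<epsilon> \<and> \<bar>z t - zs\<bar> < \<epsilon>"
    using stable_if_lyap_decreasing[OF pos eqs(1-5) decr \<open>\<epsilon> > 0\<close>] by blast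
  show "\<exists>\<eta>>0. \<forall>x y v z. is_solution s d k dl p N mu q b tau x y v z \<and> P x y v z \<and>
      (\<forall>\<theta>\<in>{-tau..0}. \<bar>x \<theta> - xs\<bar> < \<eta> \<and> \<bar>v \<theta> - vs\<bar> < \<eta>) \<and>
      \<bar>y 0 - ys\<bar> < \<eta> \<and> \<bar>z 0 - zs\<bar> < \<eta> \<longrightarrow>
      (\<forall>t\<ge>0. \<bar>x t - xs\<bar> < \<epsilon> \<and> \<bar>y t - ys\<bar> < \<epsilon> \<and> \<bar>v t - vs\<bar> < \<epsilon> \<and> \<bar>z t - zs\<bar> < \<epsilon>)"
    using \<open>\<eta> > 0\<close> near P_adm by blast
next
  fix x y v z
  assume h: "is_solution s d k dl p N mu q b tau x y v z \<and> P x y v z"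
  interpret S: virus_solution s d k dl p N mu q b tau x y v z
    using pos h P_adm by unfold_locales auto
  obtain T where ph: "S.positive_from T xs ys vs zs" using start h by blast
  show "(x \<longlongrightarrow> xs) at_top \<and> (y \<longlongrightarrow> ys) at_top \<and> (v \<longlongrightarrow> vs) at_top \<and> (z \<longlongrightarrow> zs) at_top"
    by (rule S.tendsto_equilibrium_if_dissipative[OF ph eqs(5,6) r1 r3 r2 z_case])
       (use diss h P_adm ph in blast)
qed

context virus_solution
begin

lemma positive_from_if_infected:
  assumes "y 0 + x (-tau) * v (-tau) > 0 \<or> v 0 > 0"
    and eqs: "xs > 0" "ys \<ge> 0" "vs \<ge> 0" "zs \<ge> 0" and z0: "zs > 0 \<Longrightarrow> z 0 > 0"
  shows "\<exists>T. positive_from T xs ys vs zs"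
proof -
  obtain T where T: "T \<ge> tau" "\<And>t. t \<ge> T - tau \<Longrightarrow> x t > 0 \<and> v t > 0" "\<And>t. t \<ge> T \<Longrightarrow> y t > 0"
    using eventually_positive[OF assms(1)] by metis
  have T0: "T \<ge> 0" using T(1) pos by simp
  have "\<forall>t\<ge>T. x t > 0 \<and> v t > 0" using T(2) pos by simp
  moreover have "\<forall>t\<ge>T - tau. x t * v t > 0" using T(2) by simp
  moreover have "zs = 0 \<or> (\<forall>t\<ge>T. z t > 0)"
  proof (cases "zs = 0")
    case False
    then have "z 0 > 0" using z0 eqs(4) by simp
    then show ?thesis using z_pos T0 by simp
  qed simp
  ultimately have "positive_from T xs ys vs zs"
    unfolding positive_from_def using T(3) T0 eqs by simp
  then show ?thesis by blast
qed

end

section \<open>The three equilibria\<close>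

lemma R0bar_le_one_imp:
  fixes s d k dl N mu tau :: real
  assumes "s > 0" "d > 0" "k > 0" "dl > 0" "N > 0" "mu > 0"
    and R: "R0bar s d k dl N mu tau \<le> 1"
  shows "k * exp (- dl * tau) * (s / d) \<le> mu / N"
proof -
  have "R0bar s d k dl N mu tau = k * exp (- dl * tau) * (s / d) / (mu / N)"
    unfolding R0bar_def using assms by (simp add: field_simps)
  then have "k * exp (- dl * tau) * (s / d) / (mu / N) \<le> 1" using R by simp
  moreover have "mu / N > 0" using assms by simp
  ultimately show ?thesis by (simp only: divide_le_eq_1_pos)
qed

lemma immune_free_equilibrium:
  fixes s d k dl p N mu q b tau :: real
  assumes pos: "s > 0" "d > 0" "k > 0" "dl > 0" "p > 0" "N > 0" "mu > 0" "q > 0" "b > 0"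
    and R1: "R1bar s d k dl N mu q b tau \<le> 1" and R0: "1 < R0bar s d k dl N mu tau"
  defines "xs \<equiv> mu * exp (dl * tau) / (k * N)"
    and "ys \<equiv> exp (- dl * tau) / dl * (s - d * mu * exp (dl * tau) / (k * N))"
    and "vs \<equiv> N * exp (- dl * tau) / mu * (s - d * mu * exp (dl * tau) / (k * N))"
  shows "xs > 0" "ys > 0" "vs > 0" "s = d * xs + k * xs * vs"
    "k * exp (- dl * tau) * xs * vs = dl * ys + p * ys * 0" "N * dl * ys = mu * vs"
    "q * ys \<le> b" "k * exp (- dl * tau) * xs / mu = 1 / N"
proof -
  define E where "E = exp (- dl * tau)"
  have E: "E > 0" "exp (dl * tau) = 1 / E" unfolding E_def by (auto simp: exp_minus inverse_eq_divide)
  have xs': "xs = mu / (E * k * N)" unfolding xs_def E(2) by simp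
  have xsp: "xs > 0" unfolding xs' using E pos by simp
  have dx: "d * (mu / (k * exp (- dl * tau) * N)) = d * xs" unfolding xs' E_def[symmetric] by (simp add: ac_simps)
  have R0': "R0bar s d k dl N mu tau = s / (d * xs)" unfolding R0bar_def dx ..
  have "1 < s / (d * xs)" using R0 unfolding R0' .
  then have sd: "s - d * xs > 0" using xsp pos by (simp add: less_divide_eq)
  have dxs: "d * mu * exp (dl * tau) / (k * N) = d * xs" unfolding xs_def by simp
  have ys': "ys = E / dl * (s - d * xs)" unfolding ys_def dxs E_def ..
  have vs': "vs = N * E / mu * (s - d * xs)" unfolding vs_def dxs E_def ..
  have kxs: "k * E * xs = mu / N" unfolding xs' using E pos by (simp add: field_simps)
  show "xs > 0" by (rule xsp)
  show "ys > 0" unfolding ys' using E pos sd by simp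
  show "vs > 0" unfolding vs' using E pos sd by simp
  have "k * xs * vs = (k * E * xs) * N / mu * (s - d * xs)" unfolding vs' by (simp add: ac_simps)
  also have "\<dots> = s - d * xs" unfolding kxs using pos by simp
  finally show "s = d * xs + k * xs * vs" by simp
  have "k * exp (- dl * tau) * xs * vs = (k * E * xs) * vs" unfolding E_def by simp
  also have "\<dots> = E * (s - d * xs)" unfolding kxs vs' using pos by simp
  also have "\<dots> = dl * ys" unfolding ys' using pos by simp
  finally show "k * exp (- dl * tau) * xs * vs = dl * ys + p * ys * 0" by simp
  show "N * dl * ys = mu * vs" unfolding vs' ys' using pos by simp
  show "k * exp (- dl * tau) * xs / mu = 1 / N" using kxs pos unfolding E_def by simp
  have r1: "R1bar s d k dl N mu q b tau = s / (d * xs + (1 / E) * dl * (b / q))"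
    unfolding R1bar_def dx E(2) ..
  have den: "d * xs + (1 / E) * dl * (b / q) > 0" using pos xsp E by (intro add_pos_pos mult_pos_pos divide_pos_pos) auto
  have "s \<le> d * xs + (1 / E) * dl * (b / q)" using R1 den unfolding r1 by (simp add: divide_le_eq)
  then have "s - d * xs \<le> (1 / E) * dl * (b / q)" by linarith
  then have "E * (s - d * xs) \<le> E * ((1 / E) * dl * (b / q))" using E by (simp only: mult_le_cancel_left_pos)
  then have "E * (s - d * xs) \<le> dl * (b / q)" using E by simp
  then have "E / dl * (s - d * xs) \<le> b / q" using pos by (simp add: field_simps)
  then show "q * ys \<le> b" unfolding ys' using pos by (simp add: field_simps)
qed

lemma interior_equilibrium:
  fixes s d k dl p N mu q b tau :: real
  assumes pos: "s > 0" "d > 0" "k > 0" "dl > 0" "p > 0" "N > 0" "mu > 0" "q > 0" "b > 0"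
    and R1: "R1bar s d k dl N mu q b tau > 1"
  defines "xs \<equiv> s / (d + k * N * dl * b / (mu * q))"
  defines "zs \<equiv> dl / p * (k * exp (- dl * tau) * N * xs / mu - 1)"
  shows "xs > 0" "b / q > 0" "N * dl * b / (mu * q) > 0" "zs > 0" "s = d * xs + k * xs * (N * dl * b / (mu * q))"
    "k * exp (- dl * tau) * xs * (N * dl * b / (mu * q)) = dl * (b / q) + p * (b / q) * zs"
    "N * dl * (b / q) = mu * (N * dl * b / (mu * q))"
proof -
  define E where "E = exp (- dl * tau)"
  have E: "E > 0" "exp (dl * tau) = 1 / E" unfolding E_def by (auto simp: exp_minus inverse_eq_divide)
  have den: "d + k * N * dl * b / (mu * q) > 0" using pos by (intro add_pos_pos mult_pos_pos divide_pos_pos) auto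
  show xsp: "xs > 0" unfolding xs_def using pos den by simp
  show "b / q > 0" "N * dl * b / (mu * q) > 0" using pos by auto
  have "d * xs + k * xs * (N * dl * b / (mu * q)) = xs * (d + k * N * dl * b / (mu * q))"
    by (simp add: algebra_simps)
  also have "\<dots> = s" unfolding xs_def using den by simp
  finally show "s = d * xs + k * xs * (N * dl * b / (mu * q))" by simp
  show "N * dl * (b / q) = mu * (N * dl * b / (mu * q))" using pos by (simp add: field_simps)
  show "k * exp (- dl * tau) * xs * (N * dl * b / (mu * q)) = dl * (b / q) + p * (b / q) * zs"
    unfolding zs_def using pos by (simp add: field_simps)
  have "R1bar s d k dl N mu q b tau = s / ((1 / E) * (d * mu / (k * N) + dl * b / q))"
    unfolding R1bar_def E_def using pos E by (simp add: field_simps exp_minus)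
  also have "\<dots> = (s * E * k * N / mu) / (d + k * N * dl * b / (mu * q))"
    using pos E by (simp add: field_simps)
  also have "\<dots> = (E * k * N / mu) * (s / (d + k * N * dl * b / (mu * q)))" by simp
  also have "\<dots> = E * k * N * xs / mu" unfolding xs_def by simp
  finally have "E * k * N * xs / mu > 1" using R1 by simp
  then have "k * exp (- dl * tau) * N * xs / mu - 1 > 0" unfolding E_def by (simp add: mult.commute mult.left_commute)
  then show "zs > 0" unfolding zs_def using pos by simp
qed

lemma GAS_infection_free:
  fixes s d k dl p N mu q b tau :: real
  assumes pos: "s > 0" "d > 0" "k > 0" "dl > 0" "p > 0" "N > 0" "mu > 0" "q > 0" "b > 0" "tau > 0"
    and R0: "R0bar s d k dl N mu tau \<le> 1"
  shows "GAS s d k dl p N mu q b tau (\<lambda>x y v z. admissible tau x y v z) (s / d) 0 0 0"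
proof (rule GAS_if_lyap_dissipative[where a = "1 / N" and \<beta> = "p * b / q"])
  show "s = d * (s / d) + k * (s / d) * 0" using pos by simp
  have R: "k * exp (- dl * tau) * (s / d) \<le> mu / N" by (rule R0bar_le_one_imp) (use pos R0 in auto)
  fix x y v z T t
  assume h: "is_solution s d k dl p N mu q b tau x y v z" "admissible tau x y v z"
    and ph: "virus_solution.positive_from tau x y v z T (s / d) 0 0 0" and t: "t \<ge> T"
  interpret S: virus_solution s d k dl p N mu q b tau x y v z using pos h by unfold_locales auto
  have T0: "T \<ge> 0" and xt: "x t > 0" using ph t unfolding S.positive_from_def by auto
  show "S.lyap_deriv (s / d) 0 0 0 (1 / N) t \<le> - (exp (- dl * tau) * d * (x t - s / d)^2 / x t) - p * b / q * z t"
    by (rule S.lyap_deriv_le_infection_free[OF refl R]) (use T0 t xt in auto)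
next
  fix x y v z
  assume h: "is_solution s d k dl p N mu q b tau x y v z" "admissible tau x y v z"
  interpret S: virus_solution s d k dl p N mu q b tau x y v z using pos h by unfold_locales auto
  have "S.positive_from (tau + 1) (s / d) 0 0 0" unfolding S.positive_from_def using pos S.x_pos by auto
  then show "\<exists>T. virus_solution.positive_from tau x y v z T (s / d) 0 0 0" by blast
qed (use pos in auto)

lemma GAS_immune_free:
  fixes s d k dl p N mu q b tau :: real
  assumes pos: "s > 0" "d > 0" "k > 0" "dl > 0" "p > 0" "N > 0" "mu > 0" "q > 0" "b > 0" "tau > 0"
    and R1: "R1bar s d k dl N mu q b tau \<le> 1" and R0: "1 < R0bar s d k dl N mu tau"
  shows "GAS s d k dl p N mu q b tau
          (\<lambda>x y v z. admissible tau x y v z \<and>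
             (y 0 + x (- tau) * v (- tau) > 0 \<or> v 0 > 0))
          (mu * exp (dl * tau) / (k * N))
          (exp (- dl * tau) / dl * (s - d * mu * exp (dl * tau) / (k * N)))
          (N * exp (- dl * tau) / mu * (s - d * mu * exp (dl * tau) / (k * N)))
          0"
  (is "GAS _ _ _ _ _ _ _ _ _ _ _ ?xs ?ys ?vs 0")
proof (rule GAS_if_lyap_dissipative[where a = "1 / N" and \<beta> = 0])
  note EQ = immune_free_equilibrium[OF pos(1-9) R1 R0]
  fix x y v z T t
  assume h: "is_solution s d k dl p N mu q b tau x y v z" "admissible tau x y v z"
    and ph: "virus_solution.positive_from tau x y v z T ?xs ?ys ?vs 0" and t: "t \<ge> T"
  interpret S: virus_solution s d k dl p N mu q b tau x y v z using pos h by unfold_locales auto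
  show "S.lyap_deriv ?xs ?ys ?vs 0 (1 / N) t \<le> - (exp (- dl * tau) * d * (x t - ?xs)\<^sup>2 / x t) - 0 * z t"
    by (rule S.dissipative_if_endemic[OF ph _ _ _ _ _ _ _ t]) (use EQ in auto)
next
  note EQ = immune_free_equilibrium[OF pos(1-9) R1 R0]
  fix x y v z
  assume h: "is_solution s d k dl p N mu q b tau x y v z"
    "admissible tau x y v z \<and> (y 0 + x (- tau) * v (- tau) > 0 \<or> v 0 > 0)"
  interpret S: virus_solution s d k dl p N mu q b tau x y v z using pos h by unfold_locales auto
  show "\<exists>T. S.positive_from T ?xs ?ys ?vs 0"
    by (rule S.positive_from_if_infected) (use h EQ in auto)
qed (use pos immune_free_equilibrium[OF pos(1-9) R1 R0] in auto)

lemma GAS_interior: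
  fixes s d k dl p N mu q b tau :: real
  assumes pos: "s > 0" "d > 0" "k > 0" "dl > 0" "p > 0" "N > 0" "mu > 0" "q > 0" "b > 0" "tau > 0"
    and R1: "R1bar s d k dl N mu q b tau > 1"
  defines "x2 \<equiv> s / (d + k * N * dl * b / (mu * q))"
  shows "GAS s d k dl p N mu q b tau
          (\<lambda>x y v z. admissible tau x y v z \<and> z 0 > 0 \<and>
             (y 0 + x (- tau) * v (- tau) > 0 \<or> v 0 > 0))
          x2 (b / q) (N * dl * b / (mu * q))
          (dl / p * (k * exp (- dl * tau) * N * x2 / mu - 1))"
  (is "GAS _ _ _ _ _ _ _ _ _ _ _ _ ?ys ?vs ?zs")
proof (rule GAS_if_lyap_dissipative[where a = "k * exp (- dl * tau) * x2 / mu" and \<beta> = 0])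
  note EQ = interior_equilibrium[OF pos(1-9) R1, folded x2_def]
  fix x y v z T t
  assume h: "is_solution s d k dl p N mu q b tau x y v z" "admissible tau x y v z"
    and ph: "virus_solution.positive_from tau x y v z T x2 ?ys ?vs ?zs" and t: "t \<ge> T"
  interpret S: virus_solution s d k dl p N mu q b tau x y v z using pos h by unfold_locales auto
  show "S.lyap_deriv x2 ?ys ?vs ?zs (k * exp (- dl * tau) * x2 / mu) t
      \<le> - (exp (- dl * tau) * d * (x t - x2)\<^sup>2 / x t) - 0 * z t"
    by (rule S.dissipative_if_endemic[OF ph _ _ _ _ _ _ _ t]) (use EQ pos in auto)
next
  note EQ = interior_equilibrium[OF pos(1-9) R1, folded x2_def]
  fix x y v z
  assume h: "is_solution s d k dl p N mu q b tau x y v z"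
    "admissible tau x y v z \<and> z 0 > 0 \<and> (y 0 + x (- tau) * v (- tau) > 0 \<or> v 0 > 0)"
  interpret S: virus_solution s d k dl p N mu q b tau x y v z using pos h by unfold_locales auto
  show "\<exists>T. S.positive_from T x2 ?ys ?vs ?zs"
    by (rule S.positive_from_if_infected) (use h EQ in auto)
qed (use pos interior_equilibrium[OF pos(1-9) R1, folded x2_def] in auto)

theorem theorem4p1:
  fixes s d k dl p N mu q b tau :: real
  assumes "s > 0" "d > 0" "k > 0" "dl > 0" "p > 0" "N > 0" "mu > 0" "q > 0" "b > 0"
    and "tau > 0"
  defines "x2 \<equiv> s / (d + k * N * dl * b / (mu * q))"
  shows
    "(R0bar s d k dl N mu tau \<le> 1 \<longrightarrow>
        GAS s d k dl p N mu q b tau (\<lambda>x y v z. admissible tau x y v z)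
          (s / d) 0 0 0)
     \<and>
     (R1bar s d k dl N mu q b tau \<le> 1 \<and> 1 < R0bar s d k dl N mu tau \<longrightarrow>
        GAS s d k dl p N mu q b tau
          (\<lambda>x y v z. admissible tau x y v z \<and>
             (y 0 + x (- tau) * v (- tau) > 0 \<or> v 0 > 0))
          (mu * exp (dl * tau) / (k * N))
          (exp (- dl * tau) / dl * (s - d * mu * exp (dl * tau) / (k * N)))
          (N * exp (- dl * tau) / mu * (s - d * mu * exp (dl * tau) / (k * N)))
          0)
     \<and>
     (R1bar s d k dl N mu q b tau > 1 \<longrightarrow>
        GAS s d k dl p N mu q b tau
          (\<lambda>x y v z. admissible tau x y v z \<and> z 0 > 0 \<and>
             (y 0 + x (- tau) * v (- tau) > 0 \<or> v 0 > 0))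
          x2 (b / q) (N * dl * b / (mu * q))
          (dl / p * (k * exp (- dl * tau) * N * x2 / mu - 1)))"
  using GAS_infection_free[OF assms(1-10)] GAS_immune_free[OF assms(1-10)] GAS_interior[OF assms(1-10)]
  unfolding x2_def by blast

end
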